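(* Let $G$ be a connected graph of order $n\ge 3$. Then: (i) $\gamma_{oidR}(G)=3$ if and only if $G$ is a star; (ii) $\gamma_{oidR}(G)=4$ if and only if $G\in\mathcal{G}$; (iii) $\gamma_{oidR}(G)=5$ if and only if $G\in \bigcup_{i=1}^{6}\mathcal{H}_i$, where the families $\mathcal{G}$ and $\mathcal{H}_1,\dots,\mathcal{H}_6$ are as defined in the context.
   Context: All graphs are finite and simple. A double Roman dominating function (DRD function) of $G$ is $f:V(G)\to\{0,1,2,3\}$ such that every vertex $v$ with $f(v)=0$ has a neighbor $u$ with $f(u)=3$ or two neighbors $u,w$ with $f(u)=f(w)=2$, and every vertex $v$ with $f(v)=1$ has a neighbor assigned at least $2$. An outer independent double Roman dominating function (OIDRD function) is a DRD function $f$ such that $V_0=\{v: f(v)=0\}$ is an independent set. $\gamma_{oidR}(G)$ is the minimum weight $\sum_{v}f(v)$ over all OIDRD functions of $G$. The family $\mathcal{G}$ consists of all graphs of the following three forms: $G_1$: two adjacent vertices $v_1,v_2$, some number $\ell\ge1$ of leaves attached to $v_1$, and $k\ge 1$ further vertices $w_1,\dots,w_k$ each adjacent exactly to $v_1$ and $v_2$; $G_2$: two adjacent vertices $v_1,v_2$ and $k\ge1$ vertices $w_1,\dots,w_k$ each adjacent exactly to $v_1$ and $v_2$; $G_3$: two nonadjacent vertices $v_1,v_2$ and $k\ge 2$ vertices $w_1,\dots,w_k$ each adjacent exactly to $v_1$ and $v_2$. Convention: for vertices $v_1,\dots,v_r$, $V_{v_1,\dots,v_r}$ denotes a (possibly empty,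 unless stated otherwise) set of new vertices, disjoint from everything else, each vertex $v$ of which satisfies $N(v)=\{v_1,\dots,v_r\}$. Each graph in the families below consists exactly of the starting vertices and the added sets. $\mathcal{H}_1$: start with a path $abc$ (edges $ab,bc$ only) and add sets $V_b,V_{a,b},V_{b,c},V_{a,b,c}$ such that one of: ($a_1$) $V_{a,b}=V_{b,c}=\emptyset$ and $|V_{a,b,c}|\ge2$; ($b_1$) exactly one of $V_{a,b},V_{b,c}$ is empty and $V_{a,b,c}\ne\emptyset$; ($c_1$) $V_{a,b}\ne\emptyset$ and $V_{b,c}\ne\emptyset$. $\mathcal{H}_2$: start with a triangle $abca$ and add sets $V_b,V_{a,b},V_{b,c},V_{a,b,c}$ such that ($a_2$) $V_{a,b,c}\neq\emptyset$ or ($b_2$) $V_{a,b}\ne\emptyset$ and $V_{b,c}\ne\emptyset$. $\mathcal{H}_3$: start with two nonadjacent vertices $a,b$ and add nonempty sets $V_a$ and $V_{a,b}$. $\mathcal{H}_4$: start with a vertex $a$ and an edge $bc$ ($a$ adjacent to neither) and add sets $V_{a,b}$ and $V_{a,b,c}$ such that ($a_4$) $V_{a,b}=\emptyset$ and $|V_{a,b,c}|\ge 2$, or ($b_4$) $V_{a,b}\ne\emptyset$. $\mathcal{H}_5$: start with a path $abc$ and add sets $V_{a,b}$ and $V_{a,b,c}$ such that ($a_5$) $V_{a,b}\ne\emptyset$ and $V_{a,b,c}\ne\emptyset$, or ($b_5$) $V_{a,b}=\emptyset$ and $|V_{a,b,c}|\ge2$. $\mathcal{H}_6$: start with a path $abc$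 and add sets $V_{a,c}$ and $V_{a,b,c}$ such that ($a_6$) $V_{a,c}\ne\emptyset$ and $V_{a,b,c}\ne\emptyset$, or ($b_6$) $V_{a,c}=\emptyset$ and $|V_{a,b,c}|\ge 2$. *)

theory Defs
  imports Main
begin

definition simple_graph :: "'a set \<Rightarrow> ('a \<Rightarrow> 'a \<Rightarrow> bool) \<Rightarrow> bool" where
  "simple_graph V E \<longleftrightarrow> finite V \<and> (\<forall>x y. E x y \<longrightarrow> x \<in> V \<and> y \<in> V)
     \<and> (\<forall>x y. E x y \<longrightarrow> E y x) \<and> (\<forall>x. \<not> E x x)"

definition connected_graph :: "'a set \<Rightarrow> ('a \<Rightarrow> 'a \<Rightarrow> bool) \<Rightarrow> bool" where
  "connected_graph V E \<longleftrightarrow> (\<forall>u\<in>V. \<forall>v\<in>V. (u, v) \<in> {(x, y). E x y}\<^sup>*)"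

definition nbr :: "'a set \<Rightarrow> ('a \<Rightarrow> 'a \<Rightarrow> bool) \<Rightarrow> 'a \<Rightarrow> 'a set" where
  "nbr V E v = {u \<in> V. E v u}"

definition drd :: "'a set \<Rightarrow> ('a \<Rightarrow> 'a \<Rightarrow> bool) \<Rightarrow> ('a \<Rightarrow> nat) \<Rightarrow> bool" where
  "drd V E f \<longleftrightarrow> (\<forall>v\<in>V. f v \<le> 3)
     \<and> (\<forall>v\<in>V. f v = 0 \<longrightarrow> (\<exists>u\<in>V. E v u \<and> f u = 3)
            \<or> (\<exists>u\<in>V. \<exists>w\<in>V. u \<noteq> w \<and> E v u \<and> E v w \<and> f u = 2 \<and> f w = 2))
     \<and> (\<forall>v\<in>V. f v = 1 \<longrightarrow> (\<exists>u\<in>V. E v u \<and> f u \<ge> 2))"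

definition oidrd :: "'a set \<Rightarrow> ('a \<Rightarrow> 'a \<Rightarrow> bool) \<Rightarrow> ('a \<Rightarrow> nat) \<Rightarrow> bool" where
  "oidrd V E f \<longleftrightarrow> drd V E f \<and> (\<forall>u\<in>V. \<forall>v\<in>V. f u = 0 \<and> f v = 0 \<longrightarrow> \<not> E u v)"

definition gamma_oidR :: "'a set \<Rightarrow> ('a \<Rightarrow> 'a \<Rightarrow> bool) \<Rightarrow> nat" where
  "gamma_oidR V E = Min {sum f V | f. oidrd V E f}"

definition is_star :: "'a set \<Rightarrow> ('a \<Rightarrow> 'a \<Rightarrow> bool) \<Rightarrow> bool" where
  "is_star V E \<longleftrightarrow> (\<exists>c\<in>V. \<forall>v\<in>V - {c}. nbr V E v = {c})"

(* S is a set of added vertices (disjoint from the starting vertices B), each with neighbourhood X *)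
definition attached :: "'a set \<Rightarrow> ('a \<Rightarrow> 'a \<Rightarrow> bool) \<Rightarrow> 'a set \<Rightarrow> 'a set \<Rightarrow> 'a set \<Rightarrow> bool" where
  "attached V E B S X \<longleftrightarrow> S \<subseteq> V - B \<and> (\<forall>x\<in>S. nbr V E x = X)"

definition famG :: "'a set \<Rightarrow> ('a \<Rightarrow> 'a \<Rightarrow> bool) \<Rightarrow> bool" where
  "famG V E \<longleftrightarrow> (\<exists>v1 v2 L W. v1 \<in> V \<and> v2 \<in> V \<and> v1 \<noteq> v2 \<and>
      attached V E {v1, v2} L {v1} \<and> attached V E {v1, v2} W {v1, v2} \<and>
      V = {v1, v2} \<union> L \<union> W \<and>
      ((E v1 v2 \<and> L \<noteq> {} \<and> W \<noteq> {})        \<comment> \<open>G_1\<close>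
       \<or> (E v1 v2 \<and> L = {} \<and> W \<noteq> {})        \<comment> \<open>G_2\<close>
       \<or> (\<not> E v1 v2 \<and> L = {} \<and> card W \<ge> 2)))  \<comment> \<open>G_3\<close>"

definition famH1 :: "'a set \<Rightarrow> ('a \<Rightarrow> 'a \<Rightarrow> bool) \<Rightarrow> bool" where
  "famH1 V E \<longleftrightarrow> (\<exists>a b c Vb Vab Vbc Vabc. a \<in> V \<and> b \<in> V \<and> c \<in> V \<and> distinct [a, b, c] \<and>
      E a b \<and> E b c \<and> \<not> E a c \<and>
      attached V E {a, b, c} Vb {b} \<and> attached V E {a, b, c} Vab {a, b} \<and>
      attached V E {a, b, c} Vbc {b, c} \<and> attached V E {a, b, c} Vabc {a, b, c} \<and>
      V = {a, b, c} \<union> Vb \<union> Vab \<union> Vbc \<union> Vabc \<and>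
      ((Vab = {} \<and> Vbc = {} \<and> card Vabc \<ge> 2)
       \<or> ((Vab = {} \<longleftrightarrow> Vbc \<noteq> {}) \<and> Vabc \<noteq> {})
       \<or> (Vab \<noteq> {} \<and> Vbc \<noteq> {})))"

definition famH2 :: "'a set \<Rightarrow> ('a \<Rightarrow> 'a \<Rightarrow> bool) \<Rightarrow> bool" where
  "famH2 V E \<longleftrightarrow> (\<exists>a b c Vb Vab Vbc Vabc. a \<in> V \<and> b \<in> V \<and> c \<in> V \<and> distinct [a, b, c] \<and>
      E a b \<and> E b c \<and> E a c \<and>
      attached V E {a, b, c} Vb {b} \<and> attached V E {a, b, c} Vab {a, b} \<and>
      attached V E {a, b, c} Vbc {b, c} \<and> attached V E {a, b, c} Vabc {a, b, c} \<and>
      V = {a, b, c} \<union> Vb \<union> Vab \<union> Vbc \<union> Vabc \<and>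
      (Vabc \<noteq> {} \<or> (Vab \<noteq> {} \<and> Vbc \<noteq> {})))"

definition famH3 :: "'a set \<Rightarrow> ('a \<Rightarrow> 'a \<Rightarrow> bool) \<Rightarrow> bool" where
  "famH3 V E \<longleftrightarrow> (\<exists>a b Va Vab. a \<in> V \<and> b \<in> V \<and> a \<noteq> b \<and> \<not> E a b \<and>
      attached V E {a, b} Va {a} \<and> attached V E {a, b} Vab {a, b} \<and>
      V = {a, b} \<union> Va \<union> Vab \<and> Va \<noteq> {} \<and> Vab \<noteq> {})"

definition famH4 :: "'a set \<Rightarrow> ('a \<Rightarrow> 'a \<Rightarrow> bool) \<Rightarrow> bool" where
  "famH4 V E \<longleftrightarrow> (\<exists>a b c Vab Vabc. a \<in> V \<and> b \<in> V \<and> c \<in> V \<and> distinct [a, b, c] \<and>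
      E b c \<and> \<not> E a b \<and> \<not> E a c \<and>
      attached V E {a, b, c} Vab {a, b} \<and> attached V E {a, b, c} Vabc {a, b, c} \<and>
      V = {a, b, c} \<union> Vab \<union> Vabc \<and>
      ((Vab = {} \<and> card Vabc \<ge> 2) \<or> Vab \<noteq> {}))"

definition famH5 :: "'a set \<Rightarrow> ('a \<Rightarrow> 'a \<Rightarrow> bool) \<Rightarrow> bool" where
  "famH5 V E \<longleftrightarrow> (\<exists>a b c Vab Vabc. a \<in> V \<and> b \<in> V \<and> c \<in> V \<and> distinct [a, b, c] \<and>
      E a b \<and> E b c \<and> \<not> E a c \<and>
      attached V E {a, b, c} Vab {a, b} \<and> attached V E {a, b, c} Vabc {a, b, c} \<and>
      V = {a, b, c} \<union> Vab \<union> Vabc \<and>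
      ((Vab \<noteq> {} \<and> Vabc \<noteq> {}) \<or> (Vab = {} \<and> card Vabc \<ge> 2)))"

definition famH6 :: "'a set \<Rightarrow> ('a \<Rightarrow> 'a \<Rightarrow> bool) \<Rightarrow> bool" where
  "famH6 V E \<longleftrightarrow> (\<exists>a b c Vac Vabc. a \<in> V \<and> b \<in> V \<and> c \<in> V \<and> distinct [a, b, c] \<and>
      E a b \<and> E b c \<and> \<not> E a c \<and>
      attached V E {a, b, c} Vac {a, c} \<and> attached V E {a, b, c} Vabc {a, b, c} \<and>
      V = {a, b, c} \<union> Vac \<union> Vabc \<and>
      ((Vac \<noteq> {} \<and> Vabc \<noteq> {}) \<or> (Vac = {} \<and> card Vabc \<ge> 2)))"

end

theory Submission
  imports Defs
begin

(* A minimum OIDRD of weight at most 5 can be replaced by one that vanishes outside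
   at most three vertices, with values 3; 3,1; 2,2; 3,2; 3,1,1 or 2,2,1 there.  Each of these
   weightings is an OIDRD iff the remaining vertices have neighbourhoods of a prescribed shape.
   Weight 3 is a star, the two weightings of weight 4 describe the stars and the family G, and for
   the three weightings of weight 5 the classes V_X of remaining vertices with neighbourhood X
   exhibit one of H1, ..., H6 unless the graph already carries a weightings of weight 4.
   Conversely no graph in H1, ..., H6 carries one: if the 3,1 or 2,2 weighting on {x, y} is an
   OIDRD, every edge meets {x, y}, every other vertex is adjacent to x and, unless x ~ y, to y;
   this rules out a bowtie, two triangles on a common edge together with an edge avoiding it,
   and an induced path on four vertices, one of which occurs in every graph of H1, ..., H6. *)

section \<open>Weightings supported on at most three vertices\<close>

lemma oidrd_iff_nbr:
  "oidrd V E f \<longleftrightarrow> (\<forall>v\<in>V. f v \<le> 3) \<and>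
     (\<forall>v\<in>V. f v = 0 \<longrightarrow> (\<forall>u\<in>nbr V E v. f u \<noteq> 0) \<and>
        ((\<exists>u\<in>nbr V E v. f u = 3) \<or> (\<exists>u\<in>nbr V E v. \<exists>w\<in>nbr V E v. u \<noteq> w \<and> f u = 2 \<and> f w = 2))) \<and>
     (\<forall>v\<in>V. f v = 1 \<longrightarrow> (\<exists>u\<in>nbr V E v. 2 \<le> f u))"
  unfolding oidrd_def drd_def nbr_def Ball_def Bex_def mem_Collect_eq
  by (intro iffI conjI allI impI; elim conjE; metis)

lemma oidrd_cong:
  assumes "\<And>v. v \<in> V \<Longrightarrow> f v = g v"
  shows "oidrd V E f \<longleftrightarrow> oidrd V E g"
  using assms unfolding oidrd_def drd_def by (intro iffI conjI ballI impI; elim conjE) (metis+)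

lemma oidrd_3_iff:
  assumes "x \<in> V"
  shows "oidrd V E ((\<lambda>_. 0)(x := 3)) \<longleftrightarrow> (\<forall>v\<in>V - {x}. nbr V E v = {x})"
  unfolding oidrd_iff_nbr using assms by (auto simp: subset_iff)

lemma oidrd_31_iff:
  assumes "x \<in> V" "y \<in> V" "x \<noteq> y"
  shows "oidrd V E ((\<lambda>_. 0)(x := 3, y := 1)) \<longleftrightarrow> x \<in> nbr V E y \<and>
    (\<forall>v\<in>V - {x, y}. x \<in> nbr V E v \<and> nbr V E v \<subseteq> {x, y})"
  unfolding oidrd_iff_nbr using assms by (auto simp: subset_iff)

lemma oidrd_22_iff:
  assumes "x \<in> V" "y \<in> V" "x \<noteq> y"
  shows "oidrd V E ((\<lambda>_. 0)(x := 2, y := 2)) \<longleftrightarrow> (\<forall>v\<in>V - {x, y}. nbr V E v = {x, y})"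
  unfolding oidrd_iff_nbr using assms by (auto simp: subset_iff)

lemma oidrd_32_iff:
  assumes "x \<in> V" "y \<in> V" "x \<noteq> y"
  shows "oidrd V E ((\<lambda>_. 0)(x := 3, y := 2)) \<longleftrightarrow>
    (\<forall>v\<in>V - {x, y}. x \<in> nbr V E v \<and> nbr V E v \<subseteq> {x, y})"
  unfolding oidrd_iff_nbr using assms by (auto simp: subset_iff)

lemma oidrd_311_iff:
  assumes "x \<in> V" "y \<in> V" "z \<in> V" "distinct [x, y, z]"
  shows "oidrd V E ((\<lambda>_. 0)(x := 3, y := 1, z := 1)) \<longleftrightarrow> x \<in> nbr V E y \<and> x \<in> nbr V E z \<and>
    (\<forall>v\<in>V - {x, y, z}. x \<in> nbr V E v \<and> nbr V E v \<subseteq> {x, y, z})"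
  unfolding oidrd_iff_nbr using assms by (auto simp: subset_iff)

lemma oidrd_221_iff:
  assumes "x \<in> V" "y \<in> V" "z \<in> V" "distinct [x, y, z]"
  shows "oidrd V E ((\<lambda>_. 0)(x := 2, y := 2, z := 1)) \<longleftrightarrow> (x \<in> nbr V E z \<or> y \<in> nbr V E z) \<and>
    (\<forall>v\<in>V - {x, y, z}. {x, y} \<subseteq> nbr V E v \<and> nbr V E v \<subseteq> {x, y, z})"
  unfolding oidrd_iff_nbr using assms by (auto simp: subset_iff)

definition pair_oidrd :: "'a set \<Rightarrow> ('a \<Rightarrow> 'a \<Rightarrow> bool) \<Rightarrow> 'a \<Rightarrow> 'a \<Rightarrow> bool" where
  "pair_oidrd V E x y \<longleftrightarrow> x \<in> V \<and> y \<in> V \<and> x \<noteq> y \<and>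
     (oidrd V E ((\<lambda>_. 0)(x := 3, y := 1)) \<or> oidrd V E ((\<lambda>_. 0)(x := 2, y := 2)))"

lemma pair_oidrd_iff:
  "pair_oidrd V E x y \<longleftrightarrow> x \<in> V \<and> y \<in> V \<and> x \<noteq> y \<and>
     (\<forall>v\<in>V - {x, y}. x \<in> nbr V E v \<and> nbr V E v \<subseteq> {x, y}) \<and>
     (x \<in> nbr V E y \<or> (\<forall>v\<in>V - {x, y}. y \<in> nbr V E v))"
proof (cases "x \<in> V \<and> y \<in> V \<and> x \<noteq> y")
  case True
  then show ?thesis
    unfolding pair_oidrd_def using oidrd_31_iff[of x V y E] oidrd_22_iff[of x V y E] by auto
qed (auto simp: pair_oidrd_def)

section \<open>Light OIDRDs\<close>

lemma finite_oidrd_weights: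
  assumes "finite V"
  shows "finite {sum f V | f. oidrd V E f}"
proof (rule finite_subset)
  have "sum f V \<le> 3 * card V" if "oidrd V E f" for f
  proof -
    have "sum f V \<le> sum (\<lambda>_. 3) V" using that by (intro sum_mono) (simp add: oidrd_def drd_def)
    then show ?thesis by simp
  qed
  then show "{sum f V | f. oidrd V E f} \<subseteq> {..3 * card V}" by auto
qed simp

lemma gamma_oidR_le:
  assumes "finite V" "oidrd V E f"
  shows "gamma_oidR V E \<le> sum f V"
  unfolding gamma_oidR_def using finite_oidrd_weights[OF assms(1)] assms(2) by (auto intro: Min_le)

lemma gamma_oidR_attained:
  assumes "finite V"
  obtains f where "oidrd V E f" "sum f V = gamma_oidR V E"
proof -
  have "oidrd V E (\<lambda>_. 3)" by (simp add: oidrd_def drd_def)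
  then have "gamma_oidR V E \<in> {sum f V | f. oidrd V E f}"
    unfolding gamma_oidR_def using finite_oidrd_weights[OF assms] by (intro Min_in) auto
  with that show thesis by auto
qed

lemma sum_list_map_le_sum:
  fixes f :: "'a \<Rightarrow> nat"
  assumes "finite A" "set xs \<subseteq> A" "distinct xs"
  shows "sum_list (map f xs) \<le> sum f A"
  using sum_mono2[OF assms(1,2), of f] assms(3) by (simp add: sum.distinct_set_conv_list)

lemma oidrd_agree_on_support:
  assumes "finite V" "oidrd V E f" "D \<subseteq> V"
    and "\<And>v. v \<in> V \<Longrightarrow> f v = g v" "\<And>v. v \<in> V - D \<Longrightarrow> g v = 0"
  shows "oidrd V E g" "sum f V = sum g D"
  using assms oidrd_cong[of V f g E] sum.mono_neutral_right[of V D g] by (auto intro: sum.cong)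

lemma light_oidrd_with_3_cases:
  fixes f :: "'a \<Rightarrow> nat"
  assumes V: "finite V" and f: "oidrd V E f" "sum f V \<le> 5" and x: "x \<in> V" "f x = 3"
  obtains (p3) "oidrd V E ((\<lambda>_. 0)(x := 3))" "sum f V = 3"
  | (p31) y where "y \<in> V" "y \<noteq> x" "oidrd V E ((\<lambda>_. 0)(x := 3, y := 1))" "sum f V = 4"
  | (p32) y where "y \<in> V" "y \<noteq> x" "oidrd V E ((\<lambda>_. 0)(x := 3, y := 2))" "sum f V = 5"
  | (p311) y z where "y \<in> V" "z \<in> V" "distinct [x, y, z]"
      "oidrd V E ((\<lambda>_. 0)(x := 3, y := 1, z := 1))" "sum f V = 5"
proof (cases "\<forall>v\<in>V - {x}. f v = 0")
  case True
  have "oidrd V E ((\<lambda>_. 0)(x := 3))" "sum f V = 3"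
    using oidrd_agree_on_support[OF V f(1), of "{x}"] True x by auto
  then show thesis by (rule p3)
next
  case False
  then obtain y where y: "y \<in> V" "y \<noteq> x" "f y \<noteq> 0" by blast
  have "f x + f y \<le> 5" using sum_list_map_le_sum[OF V, of "[x, y]" f] x y f(2) by simp
  then have fy: "f y = 1 \<or> f y = 2" using x y by auto
  show thesis
  proof (cases "\<forall>v\<in>V - {x, y}. f v = 0")
    case True
    have "oidrd V E ((\<lambda>_. 0)(x := 3, y := f y))" "sum f V = 3 + f y"
      using oidrd_agree_on_support[OF V f(1), of "{x, y}"] True x y by auto
    then show thesis using fy p31 y p32 by auto
  next
    case False
    then obtain z where z: "z \<in> V" "z \<noteq> x" "z \<noteq> y" "f z \<noteq> 0" by blast
    have "f x + f y + f z \<le> 5" using sum_list_map_le_sum[OF V, of "[x, y, z]" f] x y z f(2) by simp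
    then have yz: "f y = 1" "f z = 1" using x y z by auto
    have "f v = 0" if "v \<in> V - {x, y, z}" for v
      using sum_list_map_le_sum[OF V, of "[x, y, z, v]" f] that x y z yz f(2) by auto
    then have "oidrd V E ((\<lambda>_. 0)(x := 3, y := 1, z := 1))" "sum f V = 5"
      using oidrd_agree_on_support[OF V f(1), of "{x, y, z}"] x y z yz by auto
    then show thesis using p311 y z by auto
  qed
qed

lemma oidrd_has_value_ge_2:
  assumes f: "oidrd V E f" and v: "v \<in> V"
  obtains u where "u \<in> V" "2 \<le> f u"
proof -
  have dom0: "f v = 0 \<Longrightarrow> \<exists>u\<in>V. f u = 3 \<or> f u = 2"
    and dom1: "f v = 1 \<Longrightarrow> \<exists>u\<in>V. 2 \<le> f u"
    using f v unfolding oidrd_def drd_def by blast+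
  consider "f v = 0" | "f v = 1" | "2 \<le> f v" by linarith
  then show thesis
  proof cases
    case 1
    then show thesis using dom0 that by fastforce
  next
    case 2
    then show thesis using dom1 that by blast
  qed (use v that in blast)
qed

lemma oidrd_unique_2_without_3:
  assumes f: "oidrd V E f" and x: "x \<in> V" "f x = 2"
    and no3: "\<forall>v\<in>V. f v \<noteq> 3" and no2: "\<forall>v\<in>V - {x}. f v \<noteq> 2"
  shows "\<forall>v\<in>V - {x}. f v = 1 \<and> x \<in> nbr V E v"
proof
  fix v assume v: "v \<in> V - {x}"
  have le3: "\<forall>u\<in>V. f u \<le> 3" using f by (simp add: oidrd_def drd_def)
  have "f v \<noteq> 0"
  proof
    assume "f v = 0"
    then have "(\<exists>u\<in>V. f u = 3) \<or> (\<exists>u\<in>V. \<exists>w\<in>V. u \<noteq> w \<and> f u = 2 \<and> f w = 2)"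
      using f v unfolding oidrd_def drd_def by blast
    then show False using no2 no3 by blast
  qed
  moreover have "f v \<noteq> 2" "f v \<noteq> 3" "f v \<le> 3" using v no2 no3 le3 by auto
  ultimately have fv: "f v = 1" by linarith
  then obtain u where u: "u \<in> V" "E v u" "2 \<le> f u"
    using f v unfolding oidrd_def drd_def by blast
  have "f u \<noteq> 3" "f u \<le> 3" using u(1) no3 le3 by auto
  then have "f u = 2" using u(3) by linarith
  then have "u = x" using u(1) no2 by blast
  then show "f v = 1 \<and> x \<in> nbr V E v" using fv u by (simp add: nbr_def)
qed

locale sgraph =
  fixes V :: "'a set" and E :: "'a \<Rightarrow> 'a \<Rightarrow> bool"
  assumes simple: "simple_graph V E"
begin

lemma finite_V: "finite V"
  using simple by (simp add: simple_graph_def)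

lemma adj_sym: "E u v \<Longrightarrow> E v u"
  using simple by (simp add: simple_graph_def)

lemma adj_irrefl: "\<not> E v v"
  using simple by (simp add: simple_graph_def)

lemma adj_in_V: "E u v \<Longrightarrow> u \<in> V" "E u v \<Longrightarrow> v \<in> V"
  using simple by (auto simp: simple_graph_def)

lemma mem_nbr_iff: "u \<in> nbr V E v \<longleftrightarrow> E v u"
  using adj_in_V by (auto simp: nbr_def)

lemma nbr_sym: "u \<in> nbr V E v \<longleftrightarrow> v \<in> nbr V E u"
  using adj_sym by (auto simp: mem_nbr_iff)

lemma nbr_subset: "nbr V E v \<subseteq> V - {v}"
  using adj_irrefl by (auto simp: nbr_def)

lemma is_star_iff_oidrd_3: "is_star V E \<longleftrightarrow> (\<exists>x\<in>V. oidrd V E ((\<lambda>_. 0)(x := 3)))"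
  by (simp add: is_star_def oidrd_3_iff)

lemma light_oidrd_single_2_cases:
  fixes f :: "'a \<Rightarrow> nat"
  assumes n: "3 \<le> card V" and f: "sum f V \<le> 5" and x: "x \<in> V" "f x = 2"
    and rest: "\<forall>v\<in>V - {x}. f v = 1 \<and> x \<in> nbr V E v"
  obtains (p31) y where "y \<in> V" "y \<noteq> x" "oidrd V E ((\<lambda>_. 0)(x := 3, y := 1))" "sum f V = 4"
  | (p311) y z where "y \<in> V" "z \<in> V" "distinct [x, y, z]"
      "oidrd V E ((\<lambda>_. 0)(x := 3, y := 1, z := 1))" "sum f V = 5"
proof -
  have w: "sum f V = 2 + card (V - {x})" using rest x finite_V by (simp add: sum.remove)
  then have "card (V - {x}) = 2 \<or> card (V - {x}) = 3" using n f x finite_V by auto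
  then show thesis
  proof
    assume "card (V - {x}) = 2"
    then obtain y z where yz: "V - {x} = {y, z}" "y \<noteq> z" by (auto simp: card_2_iff)
    then have "oidrd V E ((\<lambda>_. 0)(x := 3, y := 1))"
      using rest nbr_subset[of z] x by (subst oidrd_31_iff) auto
    then show thesis using p31 yz w by auto
  next
    assume "card (V - {x}) = 3"
    then obtain y z u where yzu: "V - {x} = {y, z, u}" "distinct [y, z, u]" by (auto simp: card_3_iff)
    then have "oidrd V E ((\<lambda>_. 0)(x := 3, y := 1, z := 1))"
      using rest nbr_subset[of u] x by (subst oidrd_311_iff) auto
    then show thesis using p311 yzu w by auto
  qed
qed

lemma light_oidrd_without_3_cases:
  fixes f :: "'a \<Rightarrow> nat"
  assumes n: "3 \<le> card V" and f: "oidrd V E f" "sum f V \<le> 5"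
    and x: "x \<in> V" "f x = 2" and no3: "\<forall>v\<in>V. f v \<noteq> 3"
  obtains (p22) y where "y \<in> V" "y \<noteq> x" "oidrd V E ((\<lambda>_. 0)(x := 2, y := 2))" "sum f V = 4"
  | (p221) y z where "y \<in> V" "z \<in> V" "distinct [x, y, z]"
      "oidrd V E ((\<lambda>_. 0)(x := 2, y := 2, z := 1))" "sum f V = 5"
  | (p31) y where "y \<in> V" "y \<noteq> x" "oidrd V E ((\<lambda>_. 0)(x := 3, y := 1))" "sum f V = 4"
  | (p311) y z where "y \<in> V" "z \<in> V" "distinct [x, y, z]"
      "oidrd V E ((\<lambda>_. 0)(x := 3, y := 1, z := 1))" "sum f V = 5"
proof (cases "\<exists>y\<in>V - {x}. f y = 2")
  case True
  then obtain y where y: "y \<in> V" "y \<noteq> x" "f y = 2" by blast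
  show thesis
  proof (cases "\<forall>v\<in>V - {x, y}. f v = 0")
    case True
    have "oidrd V E ((\<lambda>_. 0)(x := 2, y := 2))" "sum f V = 4"
      using oidrd_agree_on_support[OF finite_V f(1), of "{x, y}"] True x y by auto
    then show thesis using p22 y by blast
  next
    case False
    then obtain z where z: "z \<in> V" "z \<noteq> x" "z \<noteq> y" "f z \<noteq> 0" by blast
    have "f x + f y + f z \<le> 5"
      using sum_list_map_le_sum[OF finite_V, of "[x, y, z]" f] x y z f(2) by simp
    then have fz: "f z = 1" using x y z by auto
    have "f v = 0" if "v \<in> V - {x, y, z}" for v
      using sum_list_map_le_sum[OF finite_V, of "[x, y, z, v]" f] that x y z fz f(2) by auto
    then have "oidrd V E ((\<lambda>_. 0)(x := 2, y := 2, z := 1))" "sum f V = 5"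
      using oidrd_agree_on_support[OF finite_V f(1), of "{x, y, z}"] x y z fz by auto
    then show thesis using p221 y z by auto
  qed
next
  case False
  then have "\<forall>v\<in>V - {x}. f v = 1 \<and> x \<in> nbr V E v"
    using oidrd_unique_2_without_3[OF f(1) x no3] by blast
  from light_oidrd_single_2_cases[OF n f(2) x this] show thesis using p31 p311 by metis
qed

lemma gamma_oidR_le_sum_on:
  assumes "oidrd V E g" "D \<subseteq> V" "\<forall>v\<in>V - D. g v = 0"
  shows "gamma_oidR V E \<le> sum g D"
  using gamma_oidR_le[OF finite_V assms(1)] sum.mono_neutral_right[OF finite_V assms(2,3)] by simp

lemma pair_oidrd_if_star:
  assumes n: "2 \<le> card V" and star: "is_star V E"
  shows "\<exists>x y. pair_oidrd V E x y"
proof -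
  obtain c where c: "c \<in> V" "\<forall>v\<in>V - {c}. nbr V E v = {c}"
    using star unfolding is_star_def by blast
  have "card (V - {c}) \<noteq> 0" using n c(1) by (simp add: card_Diff_singleton)
  then obtain y where y: "y \<in> V - {c}" by (metis card.empty ex_in_conv)
  then have "pair_oidrd V E c y" using c by (auto simp: pair_oidrd_iff)
  then show ?thesis by blast
qed

lemma light_oidrd_cases:
  fixes f :: "'a \<Rightarrow> nat"
  assumes n: "3 \<le> card V" and f: "oidrd V E f" "sum f V \<le> 5"
  obtains (star) "is_star V E" "sum f V = 3"
  | (pair) x y where "pair_oidrd V E x y" "sum f V = 4"
  | (p32) x y where "x \<in> V" "y \<in> V" "x \<noteq> y" "oidrd V E ((\<lambda>_. 0)(x := 3, y := 2))" "sum f V = 5"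
  | (p311) x y z where "x \<in> V" "y \<in> V" "z \<in> V" "distinct [x, y, z]"
      "oidrd V E ((\<lambda>_. 0)(x := 3, y := 1, z := 1))" "sum f V = 5"
  | (p221) x y z where "x \<in> V" "y \<in> V" "z \<in> V" "distinct [x, y, z]"
      "oidrd V E ((\<lambda>_. 0)(x := 2, y := 2, z := 1))" "sum f V = 5"
proof (cases "\<exists>x\<in>V. f x = 3")
  case True
  then obtain x where x: "x \<in> V" "f x = 3" by blast
  from light_oidrd_with_3_cases[OF finite_V f x] show thesis
    using star pair p32 p311 x by (cases; auto simp: is_star_iff_oidrd_3 pair_oidrd_def)
next
  case False
  obtain u where u: "u \<in> V" "2 \<le> f u"
    using n oidrd_has_value_ge_2[OF f(1)] by (metis card.empty ex_in_conv not_numeral_le_zero)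
  have "f u \<le> 3" using f(1) u(1) by (simp add: oidrd_def drd_def)
  then have x: "u \<in> V" "f u = 2" using u False by auto
  from light_oidrd_without_3_cases[OF n f x] show thesis
    using False pair p221 p311 x by (cases; auto simp: pair_oidrd_def)
qed

lemma gamma_oidR_ge_3:
  assumes "3 \<le> card V"
  shows "3 \<le> gamma_oidR V E"
proof -
  obtain f where f: "oidrd V E f" "sum f V = gamma_oidR V E"
    using gamma_oidR_attained[OF finite_V] by blast
  show ?thesis
  proof (cases "sum f V \<le> 5")
    case True
    from light_oidrd_cases[OF assms f(1) True] show ?thesis by cases (use f(2) in auto)
  qed (use f(2) in auto)
qed

lemma gamma_oidR_le_3_iff:
  assumes "3 \<le> card V"
  shows "gamma_oidR V E \<le> 3 \<longleftrightarrow> is_star V E"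
proof
  assume le: "gamma_oidR V E \<le> 3"
  obtain f where f: "oidrd V E f" "sum f V = gamma_oidR V E"
    using gamma_oidR_attained[OF finite_V] by blast
  have "sum f V \<le> 5" using f(2) le by simp
  from light_oidrd_cases[OF assms f(1) this] show "is_star V E" by cases (use f(2) le in auto)
next
  assume "is_star V E"
  then obtain x where x: "x \<in> V" "oidrd V E ((\<lambda>_. 0)(x := 3))" by (auto simp: is_star_iff_oidrd_3)
  have "gamma_oidR V E \<le> sum ((\<lambda>_. 0)(x := 3)) {x}"
    by (rule gamma_oidR_le_sum_on) (use x in auto)
  then show "gamma_oidR V E \<le> 3" by simp
qed

lemma gamma_oidR_le_4_iff:
  assumes n: "3 \<le> card V"
  shows "gamma_oidR V E \<le> 4 \<longleftrightarrow> (\<exists>x y. pair_oidrd V E x y)"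
proof
  assume le: "gamma_oidR V E \<le> 4"
  obtain f where f: "oidrd V E f" "sum f V = gamma_oidR V E"
    using gamma_oidR_attained[OF finite_V] by blast
  have "sum f V \<le> 5" using f(2) le by simp
  from light_oidrd_cases[OF assms f(1) this] show "\<exists>x y. pair_oidrd V E x y"
    by cases (use f(2) le pair_oidrd_if_star n in auto)
next
  assume "\<exists>x y. pair_oidrd V E x y"
  then obtain x y where p: "x \<in> V" "y \<in> V" "x \<noteq> y"
    "oidrd V E ((\<lambda>_. 0)(x := 3, y := 1)) \<or> oidrd V E ((\<lambda>_. 0)(x := 2, y := 2))"
    unfolding pair_oidrd_def by blast
  from p(4) show "gamma_oidR V E \<le> 4"
  proof
    assume "oidrd V E ((\<lambda>_. 0)(x := 3, y := 1))"
    then have "gamma_oidR V E \<le> sum ((\<lambda>_. 0)(x := 3, y := 1)) {x, y}"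
      by (rule gamma_oidR_le_sum_on) (use p in auto)
    then show ?thesis using p by simp
  next
    assume "oidrd V E ((\<lambda>_. 0)(x := 2, y := 2))"
    then have "gamma_oidR V E \<le> sum ((\<lambda>_. 0)(x := 2, y := 2)) {x, y}"
      by (rule gamma_oidR_le_sum_on) (use p in auto)
    then show ?thesis using p by simp
  qed
qed

end

section \<open>Graphs carrying an OIDRD of weight 4\<close>

text \<open>\<^term>\<open>nbr_class V E B X\<close> is the set \<open>V\<^sub>X\<close> used in the definitions of the families.\<close>

definition nbr_class :: "'a set \<Rightarrow> ('a \<Rightarrow> 'a \<Rightarrow> bool) \<Rightarrow> 'a set \<Rightarrow> 'a set \<Rightarrow> 'a set" where
  "nbr_class V E B X = {v \<in> V - B. nbr V E v = X}"

lemma attached_nbr_class: "attached V E B (nbr_class V E B X) X"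
  by (auto simp: attached_def nbr_class_def)

lemma attached_nbr_class_eq:
  assumes "B = B'" "X = X'"
  shows "attached V E B' (nbr_class V E B X) X'"
  using assms attached_nbr_class by metis

lemma attachedD:
  assumes "attached V E B S X" "v \<in> S"
  shows "v \<in> V" "v \<notin> B" "nbr V E v = X"
  using assms by (auto simp: attached_def)

lemma two_le_card_if_not_singleton:
  assumes "finite A" "A \<noteq> {}" "\<forall>w. A \<noteq> {w}"
  shows "2 \<le> card A"
proof -
  have "card A \<noteq> 0" using assms(1,2) by simp
  moreover have "card A \<noteq> 1" using assms(3) by (auto simp: card_1_singleton_iff)
  ultimately show ?thesis by linarith
qed

lemma two_elements_if_two_le_card:
  assumes "2 \<le> card A"
  obtains w1 w2 where "w1 \<in> A" "w2 \<in> A" "w1 \<noteq> w2"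
  using assms by (metis One_nat_def card_le_Suc0_iff_eq not_less_eq_eq numeral_2_eq_2 card.infinite zero_le)

context sgraph
begin

lemma attached_adj_iff:
  assumes "attached V E B S X" "v \<in> S"
  shows "E v u \<longleftrightarrow> u \<in> X"
  using attachedD(3)[OF assms] mem_nbr_iff by blast

lemma is_star_if_center:
  assumes "c \<in> V" "\<And>v. v \<in> V - {c} \<Longrightarrow> nbr V E v = {c}"
  shows "is_star V E"
  using assms unfolding is_star_def by blast

lemma star_or_famG_if_pair_oidrd_adjacent:
  assumes p: "pair_oidrd V E x y" and "E x y"
  shows "is_star V E \<or> famG V E"
proof -
  have xy: "x \<in> V" "y \<in> V" "x \<noteq> y"
    and R: "\<And>v. v \<in> V - {x, y} \<Longrightarrow> nbr V E v = {x} \<or> nbr V E v = {x, y}"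
    using p unfolding pair_oidrd_iff by auto
  define L where "L = nbr_class V E {x, y} {x}"
  define W where "W = nbr_class V E {x, y} {x, y}"
  have aL: "attached V E {x, y} L {x}" and aW: "attached V E {x, y} W {x, y}"
    unfolding L_def W_def by (rule attached_nbr_class)+
  have V: "V = {x, y} \<union> L \<union> W" using xy R by (auto simp: L_def W_def nbr_class_def)
  show ?thesis
  proof (cases "W = {}")
    case True
    have "nbr V E y = {x}"
    proof (intro equalityI subsetI)
      fix u assume u: "u \<in> nbr V E y"
      show "u \<in> {x}"
      proof (rule ccontr)
        assume "u \<notin> {x}"
        then have "u \<in> V - {x, y}" "y \<in> nbr V E u" using u nbr_subset nbr_sym by auto
        then show False using R[of u] True by (auto simp: W_def nbr_class_def)
      qed
    qed (use \<open>E x y\<close> adj_sym in \<open>auto simp: mem_nbr_iff\<close>)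
    moreover have "nbr V E v = {x}" if "v \<in> V - {x, y}" for v
      using R[OF that] that True by (auto simp: W_def nbr_class_def)
    ultimately show ?thesis using xy is_star_if_center[of x] by auto
  next
    case False
    have c: "(E x y \<and> L \<noteq> {} \<and> W \<noteq> {}) \<or> (E x y \<and> L = {} \<and> W \<noteq> {})
      \<or> (\<not> E x y \<and> L = {} \<and> 2 \<le> card W)"
      using \<open>E x y\<close> False by blast
    have "famG V E" unfolding famG_def
      by (rule exI[of _ x], rule exI[of _ y], rule exI[of _ L], rule exI[of _ W]) (intro conjI xy aL aW V c)
    then show ?thesis ..
  qed
qed

lemma star_or_famG_if_pair_oidrd_nonadjacent:
  assumes n: "3 \<le> card V" and p: "pair_oidrd V E x y" and "\<not> E x y"
  shows "is_star V E \<or> famG V E"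
proof -
  have xy: "x \<in> V" "y \<in> V" "x \<noteq> y"
    and R: "\<forall>v\<in>V - {x, y}. x \<in> nbr V E v \<and> nbr V E v \<subseteq> {x, y}"
    and y_or: "x \<in> nbr V E y \<or> (\<forall>v\<in>V - {x, y}. y \<in> nbr V E v)"
    using p unfolding pair_oidrd_iff by blast+
  have "x \<notin> nbr V E y" using \<open>\<not> E x y\<close> adj_sym mem_nbr_iff by blast
  then have W: "nbr V E v = {x, y}" if "v \<in> V - {x, y}" for v using that R y_or by auto
  have aL: "attached V E {x, y} {} {x}" and aW: "attached V E {x, y} (V - {x, y}) {x, y}"
    using W by (auto simp: attached_def)
  have V: "V = {x, y} \<union> {} \<union> (V - {x, y})" using xy by auto
  have "card (V - {x, y}) \<noteq> 0" using n xy finite_V by (simp add: card_Diff_subset)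
  then consider "2 \<le> card (V - {x, y})" | "card (V - {x, y}) = 1" by linarith
  then show ?thesis
  proof cases
    case 1
    then have "famG V E" unfolding famG_def
      using \<open>\<not> E x y\<close> by (intro exI[of _ x] exI[of _ y] exI[of _ "{}"] exI[of _ "V - {x, y}"] conjI xy aL aW V) auto
    then show ?thesis ..
  next
    case 2
    then obtain w where w: "V - {x, y} = {w}" by (auto simp: card_1_singleton_iff)
    then have Vw: "V = {x, y, w}" and nbr_w: "nbr V E w = {x, y}" using xy W by auto
    have "nbr V E v = {w}" if v: "v \<in> {x, y}" for v
    proof
      show "{w} \<subseteq> nbr V E v" using nbr_w v nbr_sym by auto
      show "nbr V E v \<subseteq> {w}"
      proof
        fix u assume "u \<in> nbr V E v"
        then have "u \<in> V - {v}" "E v u" using nbr_subset mem_nbr_iff by auto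
        then show "u \<in> {w}" using Vw v \<open>\<not> E x y\<close> adj_sym by auto
      qed
    qed
    then show ?thesis using Vw is_star_if_center[of w] by auto
  qed
qed

lemma famG_imp_pair_oidrd:
  assumes "famG V E"
  shows "\<exists>x y. pair_oidrd V E x y"
proof -
  obtain v1 v2 L W where v: "v1 \<in> V" "v2 \<in> V" "v1 \<noteq> v2"
    and aL: "attached V E {v1, v2} L {v1}" and aW: "attached V E {v1, v2} W {v1, v2}"
    and V: "V = {v1, v2} \<union> L \<union> W"
    and c: "(E v1 v2 \<and> L \<noteq> {} \<and> W \<noteq> {}) \<or> (E v1 v2 \<and> L = {} \<and> W \<noteq> {})
      \<or> (\<not> E v1 v2 \<and> L = {} \<and> 2 \<le> card W)"
    using assms unfolding famG_def by (elim exE conjE) (rule that; assumption)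
  have R: "nbr V E v = {v1} \<or> nbr V E v = {v1, v2}" if "v \<in> V - {v1, v2}" for v
    using that V attachedD(3)[OF aL] attachedD(3)[OF aW] by blast
  have "v1 \<in> nbr V E v2 \<or> (\<forall>v\<in>V - {v1, v2}. nbr V E v = {v1, v2})"
  proof (cases "E v1 v2")
    case True
    then show ?thesis using adj_sym mem_nbr_iff by blast
  next
    case False
    then have "L = {}" using c by blast
    then show ?thesis using V attachedD(3)[OF aW] by blast
  qed
  then have "pair_oidrd V E v1 v2" using v R unfolding pair_oidrd_iff by fastforce
  then show ?thesis by blast
qed

lemma famG_not_star:
  assumes "famG V E"
  shows "\<not> is_star V E"
proof
  assume "is_star V E"
  then obtain c where c: "c \<in> V" "\<And>v. v \<in> V - {c} \<Longrightarrow> nbr V E v = {c}"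
    unfolding is_star_def by blast
  obtain v1 v2 W where v: "v1 \<in> V" "v2 \<in> V" "v1 \<noteq> v2"
    and aW: "attached V E {v1, v2} W {v1, v2}"
    and cond: "(E v1 v2 \<and> W \<noteq> {}) \<or> (\<not> E v1 v2 \<and> 2 \<le> card W)"
    using assms unfolding famG_def by blast
  have W_center: "w = c" if "w \<in> W" for w
  proof (rule ccontr)
    assume "w \<noteq> c"
    then have "{v1, v2} = {c}" using c(2)[of w] attachedD[OF aW that] by auto
    then show False using v(3) by auto
  qed
  show False
  proof (cases "E v1 v2")
    case True
    then obtain w where "w \<in> W" using cond by blast
    then have "v1 \<noteq> c" using W_center attachedD(2)[OF aW] by blast
    then have "nbr V E v1 = {c}" using c(2) v(1) by blast
    moreover have "v2 \<in> nbr V E v1" "v2 \<noteq> c"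
      using True mem_nbr_iff W_center \<open>w \<in> W\<close> attachedD(2)[OF aW] by auto
    ultimately show False by blast
  next
    case False
    then have "2 \<le> card W" using cond by blast
    then obtain w1 w2 where "w1 \<in> W" "w2 \<in> W" "w1 \<noteq> w2" by (rule two_elements_if_two_le_card)
    then show False using W_center by blast
  qed
qed

lemma pair_oidrd_iff_star_or_famG:
  assumes n: "3 \<le> card V"
  shows "(\<exists>x y. pair_oidrd V E x y) \<longleftrightarrow> is_star V E \<or> famG V E"
  using star_or_famG_if_pair_oidrd_adjacent star_or_famG_if_pair_oidrd_nonadjacent[OF n]
    pair_oidrd_if_star n famG_imp_pair_oidrd by fastforce

end

section \<open>Graphs carrying an OIDRD of weight 5\<close>

context sgraph
begin

lemma has_nbr_if_connected:
  assumes "connected_graph V E" "u \<in> V" "v \<in> V" "u \<noteq> v"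
  obtains w where "w \<in> nbr V E u"
proof -
  have "(u, v) \<in> {(x, y). E x y}\<^sup>*" using assms unfolding connected_graph_def by blast
  then obtain w where "E u w" using assms(4) by (cases rule: converse_rtranclE) auto
  then show thesis using that mem_nbr_iff by blast
qed

lemma oidrd_32_imp_pair_or_famH3:
  assumes con: "connected_graph V E" and xy: "x \<in> V" "y \<in> V" "x \<noteq> y"
    and f: "oidrd V E ((\<lambda>_. 0)(x := 3, y := 2))"
  shows "pair_oidrd V E x y \<or> famH3 V E"
proof (cases "E y x \<or> (\<forall>v\<in>V - {x, y}. nbr V E v = {x, y})")
  case True
  then have "x \<in> nbr V E y \<or> (\<forall>v\<in>V - {x, y}. y \<in> nbr V E v)" using mem_nbr_iff by auto
  then show ?thesis using f xy by (auto simp: oidrd_32_iff pair_oidrd_iff)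
next
  case False
  have R: "nbr V E v = {x} \<or> nbr V E v = {x, y}" if "v \<in> V - {x, y}" for v
    using f that xy by (auto simp: oidrd_32_iff)
  define Va where "Va = nbr_class V E {x, y} {x}"
  define Vab where "Vab = nbr_class V E {x, y} {x, y}"
  have aVa: "attached V E {x, y} Va {x}" and aVab: "attached V E {x, y} Vab {x, y}"
    unfolding Va_def Vab_def by (rule attached_nbr_class)+
  have V: "V = {x, y} \<union> Va \<union> Vab" using xy R by (auto simp: Va_def Vab_def nbr_class_def)
  obtain v where "v \<in> V - {x, y}" "nbr V E v \<noteq> {x, y}" using False by blast
  then have "v \<in> Va" using R[of v] by (auto simp: Va_def nbr_class_def)
  then have Va_ne: "Va \<noteq> {}" by blast
  obtain u where u: "u \<in> nbr V E y" using has_nbr_if_connected[OF con xy(2,1)] xy(3) by metis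
  have "u \<in> V - {x, y}" using u nbr_subset False mem_nbr_iff by blast
  moreover have "y \<in> nbr V E u" using u nbr_sym by blast
  ultimately have Vab_ne: "Vab \<noteq> {}" using R[of u] by (auto simp: Vab_def nbr_class_def)
  have "\<not> E x y" using False adj_sym by blast
  have "famH3 V E" unfolding famH3_def
    by (rule exI[of _ x], rule exI[of _ y], rule exI[of _ Va], rule exI[of _ Vab])
      (intro conjI xy V Va_ne Vab_ne \<open>\<not> E x y\<close> aVa aVab)
  then show ?thesis ..
qed

lemma pair_oidrd_of_311_if_unseen:
  assumes xyz: "x \<in> V" "y \<in> V" "z \<in> V" "distinct [x, y, z]"
    and f: "oidrd V E ((\<lambda>_. 0)(x := 3, y := 1, z := 1))"
    and unseen: "\<forall>v\<in>V - {x, y, z}. y \<notin> nbr V E v"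
  shows "pair_oidrd V E x z"
proof -
  have x_nbr: "x \<in> nbr V E y" "x \<in> nbr V E z"
    and R: "\<forall>v\<in>V - {x, y, z}. x \<in> nbr V E v \<and> nbr V E v \<subseteq> {x, y, z}"
    using f unfolding oidrd_311_iff[OF xyz] by blast+
  have "nbr V E y \<subseteq> {x, z}"
  proof
    fix u assume u: "u \<in> nbr V E y"
    show "u \<in> {x, z}"
    proof (rule ccontr)
      assume "u \<notin> {x, z}"
      then have "u \<in> V - {x, y, z}" using u nbr_subset by auto
      moreover have "y \<in> nbr V E u" using u nbr_sym by blast
      ultimately show False using unseen by blast
    qed
  qed
  then show ?thesis using xyz x_nbr R unseen unfolding pair_oidrd_iff by auto
qed

lemma pair_oidrd_of_311_if_single_common_nbr:
  assumes xyz: "x \<in> V" "y \<in> V" "z \<in> V" "distinct [x, y, z]"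
    and f: "oidrd V E ((\<lambda>_. 0)(x := 3, y := 1, z := 1))" and yz: "\<not> E y z"
    and w: "w \<in> V - {x, y, z}" "nbr V E w = {x, y, z}"
    and leaves: "\<forall>v\<in>V - {x, y, z, w}. nbr V E v = {x}"
  shows "pair_oidrd V E x w"
proof -
  have x_nbr: "x \<in> nbr V E y" "x \<in> nbr V E z" using f unfolding oidrd_311_iff[OF xyz] by blast+
  have yz_nbr: "nbr V E v \<subseteq> {x, w}" if v: "v \<in> {y, z}" for v
  proof
    fix u assume u: "u \<in> nbr V E v"
    then have "u \<in> V - {v}" "v \<in> nbr V E u" using nbr_subset nbr_sym by auto
    moreover have "u \<notin> {y, z}" using u v yz adj_sym adj_irrefl mem_nbr_iff by auto
    ultimately show "u \<in> {x, w}" using leaves v xyz by auto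
  qed
  have "x \<in> nbr V E v \<and> nbr V E v \<subseteq> {x, w}" if v: "v \<in> V - {x, w}" for v
  proof (cases "v \<in> {y, z}")
    case True
    then show ?thesis using yz_nbr x_nbr by auto
  next
    case False
    then show ?thesis using leaves v by auto
  qed
  then show ?thesis using xyz w unfolding pair_oidrd_iff by auto
qed

lemma oidrd_311_nbr_cases:
  assumes xyz: "x \<in> V" "y \<in> V" "z \<in> V" "distinct [x, y, z]"
    and f: "oidrd V E ((\<lambda>_. 0)(x := 3, y := 1, z := 1))" and v: "v \<in> V - {x, y, z}"
  shows "nbr V E v = {x} \<or> nbr V E v = {y, x} \<or> nbr V E v = {x, z} \<or> nbr V E v = {y, x, z}"
  using f v unfolding oidrd_311_iff[OF xyz] by (cases "y \<in> nbr V E v"; cases "z \<in> nbr V E v") auto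

lemma famH12_of_311_nondegenerate:
  assumes xyz: "x \<in> V" "y \<in> V" "z \<in> V" "distinct [x, y, z]"
    and f: "oidrd V E ((\<lambda>_. 0)(x := 3, y := 1, z := 1))"
  defines "Vb \<equiv> nbr_class V E {y, x, z} {x}" and "Vab \<equiv> nbr_class V E {y, x, z} {y, x}"
    and "Vbc \<equiv> nbr_class V E {y, x, z} {x, z}" and "Vabc \<equiv> nbr_class V E {y, x, z} {y, x, z}"
  assumes y_seen: "Vab \<noteq> {} \<or> Vabc \<noteq> {}" and z_seen: "Vbc \<noteq> {} \<or> Vabc \<noteq> {}"
    and not_single: "E y z \<or> \<not> (Vab = {} \<and> Vbc = {} \<and> (\<exists>w. Vabc = {w}))"
  shows "famH1 V E \<or> famH2 V E"
proof -
  have E: "E y x" "E x z" using f adj_sym mem_nbr_iff unfolding oidrd_311_iff[OF xyz] by auto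
  have att: "attached V E {y, x, z} Vb {x}" "attached V E {y, x, z} Vab {y, x}"
    "attached V E {y, x, z} Vbc {x, z}" "attached V E {y, x, z} Vabc {y, x, z}"
    unfolding Vb_def Vab_def Vbc_def Vabc_def by (rule attached_nbr_class)+
  have V: "V = {y, x, z} \<union> Vb \<union> Vab \<union> Vbc \<union> Vabc"
  proof
    show "V \<subseteq> {y, x, z} \<union> Vb \<union> Vab \<union> Vbc \<union> Vabc"
      using oidrd_311_nbr_cases[OF xyz f] unfolding Vb_def Vab_def Vbc_def Vabc_def nbr_class_def by blast
    show "{y, x, z} \<union> Vb \<union> Vab \<union> Vbc \<union> Vabc \<subseteq> V"
      using xyz by (auto simp: Vb_def Vab_def Vbc_def Vabc_def nbr_class_def)
  qed
  show ?thesis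
  proof (cases "E y z")
    case True
    have c: "Vabc \<noteq> {} \<or> Vab \<noteq> {} \<and> Vbc \<noteq> {}" using y_seen z_seen by blast
    have "famH2 V E" unfolding famH2_def
      by (rule exI[of _ y], rule exI[of _ x], rule exI[of _ z], rule exI[of _ Vb], rule exI[of _ Vab],
          rule exI[of _ Vbc], rule exI[of _ Vabc]) (use xyz E True att V c in auto)
    then show ?thesis ..
  next
    case False
    have "finite Vabc" using finite_V by (simp add: Vabc_def nbr_class_def)
    then have c: "(Vab = {} \<and> Vbc = {} \<and> 2 \<le> card Vabc) \<or> ((Vab = {} \<longleftrightarrow> Vbc \<noteq> {}) \<and> Vabc \<noteq> {})
      \<or> (Vab \<noteq> {} \<and> Vbc \<noteq> {})"
      using y_seen z_seen not_single False two_le_card_if_not_singleton by blast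
    have "famH1 V E" unfolding famH1_def
      by (rule exI[of _ y], rule exI[of _ x], rule exI[of _ z], rule exI[of _ Vb], rule exI[of _ Vab],
          rule exI[of _ Vbc], rule exI[of _ Vabc]) (use xyz E False att V c in auto)
    then show ?thesis ..
  qed
qed

lemma pair_oidrd_of_311_if_classes_empty:
  assumes xyz: "x \<in> V" "y \<in> V" "z \<in> V" "distinct [x, y, z]"
    and f: "oidrd V E ((\<lambda>_. 0)(x := 3, y := 1, z := 1))"
  defines "Vab \<equiv> nbr_class V E {y, x, z} {y, x}" and "Vbc \<equiv> nbr_class V E {y, x, z} {x, z}"
    and "Vabc \<equiv> nbr_class V E {y, x, z} {y, x, z}"
  assumes empty: "Vab = {} \<or> Vbc = {}" "Vabc = {}"
  shows "\<exists>u v. pair_oidrd V E u v"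
  using empty(1)
proof
  assume "Vab = {}"
  have "y \<notin> nbr V E v" if "v \<in> V - {x, y, z}" for v
    using oidrd_311_nbr_cases[OF xyz f that] that \<open>Vab = {}\<close> empty(2) xyz
    by (auto simp: Vab_def Vabc_def nbr_class_def)
  then show ?thesis using pair_oidrd_of_311_if_unseen[OF xyz f] by blast
next
  assume "Vbc = {}"
  have "z \<notin> nbr V E v" if "v \<in> V - {x, z, y}" for v
  proof -
    have v: "v \<in> V - {x, y, z}" using that by auto
    show ?thesis using oidrd_311_nbr_cases[OF xyz f v] v \<open>Vbc = {}\<close> empty(2) xyz
      by (auto simp: Vbc_def Vabc_def nbr_class_def)
  qed
  moreover have "(\<lambda>_. 0::nat)(x := 3, y := 1, z := 1) = (\<lambda>_. 0)(x := 3, z := 1, y := 1)"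
    using xyz by (auto simp: fun_eq_iff)
  moreover have "distinct [x, z, y]" using xyz by auto
  ultimately show ?thesis using pair_oidrd_of_311_if_unseen[OF xyz(1,3,2)] f by fastforce
qed

lemma oidrd_311_imp_pair_or_famH12:
  assumes xyz: "x \<in> V" "y \<in> V" "z \<in> V" "distinct [x, y, z]"
    and f: "oidrd V E ((\<lambda>_. 0)(x := 3, y := 1, z := 1))"
  shows "(\<exists>u v. pair_oidrd V E u v) \<or> famH1 V E \<or> famH2 V E"
proof -
  define Vab where "Vab = nbr_class V E {y, x, z} {y, x}"
  define Vbc where "Vbc = nbr_class V E {y, x, z} {x, z}"
  define Vabc where "Vabc = nbr_class V E {y, x, z} {y, x, z}"
  note classes_empty = pair_oidrd_of_311_if_classes_empty[OF xyz f, folded Vab_def Vbc_def Vabc_def]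
  note nondegenerate = famH12_of_311_nondegenerate[OF xyz f, folded Vab_def Vbc_def Vabc_def]
  show ?thesis
  proof (cases "(Vab = {} \<or> Vbc = {}) \<and> Vabc = {}")
    case True
    then show ?thesis using classes_empty by blast
  next
    case nondeg: False
    show ?thesis
    proof (cases "\<not> E y z \<and> Vab = {} \<and> Vbc = {} \<and> (\<exists>w. Vabc = {w})")
      case True
      then obtain w where w: "Vabc = {w}" and empty: "Vab = {}" "Vbc = {}" by blast
      have "w \<in> Vabc" using w by simp
      then have "w \<in> V - {x, y, z}" "nbr V E w = {x, y, z}" by (auto simp: Vabc_def nbr_class_def)
      moreover have leaves: "nbr V E v = {x}" if "v \<in> V - {x, y, z, w}" for v
      proof -
        have v: "v \<in> V - {x, y, z}" and "v \<notin> Vab" "v \<notin> Vbc" "v \<notin> Vabc" using that empty w by auto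
        then have "nbr V E v \<noteq> {y, x}" "nbr V E v \<noteq> {x, z}" "nbr V E v \<noteq> {y, x, z}"
          unfolding Vab_def Vbc_def Vabc_def nbr_class_def by auto
        then show ?thesis using oidrd_311_nbr_cases[OF xyz f v] by blast
      qed
      ultimately have "pair_oidrd V E x w"
        using True leaves by (intro pair_oidrd_of_311_if_single_common_nbr[OF xyz f]) auto
      then show ?thesis by blast
    next
      case False
      have "Vab \<noteq> {} \<or> Vabc \<noteq> {}" "Vbc \<noteq> {} \<or> Vabc \<noteq> {}"
        "E y z \<or> \<not> (Vab = {} \<and> Vbc = {} \<and> (\<exists>w. Vabc = {w}))"
        using nondeg False by blast+
      then show ?thesis using nondegenerate by blast
    qed
  qed
qed

lemma pair_oidrd_of_four_vertices:
  assumes V: "V = {p, q, r, s}" "distinct [p, q, r, s]"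
    and E: "E p q" "E p r" "E p s" "\<not> E r s"
  shows "pair_oidrd V E p q"
proof -
  have sub: "nbr V E v \<subseteq> {p, q}" if v: "v \<in> {r, s}" for v
  proof
    fix u assume "u \<in> nbr V E v"
    then have "u \<in> V - {v}" "E v u" using nbr_subset mem_nbr_iff by auto
    then show "u \<in> {p, q}" using v V E adj_sym by auto
  qed
  have p_nbr: "p \<in> nbr V E v" if "v \<in> {q, r, s}" for v
    using that E adj_sym mem_nbr_iff by auto
  have "V - {p, q} = {r, s}" using V by auto
  then show ?thesis using V sub p_nbr unfolding pair_oidrd_iff by auto
qed

lemma pair_oidrd_of_221_if_unseen:
  assumes xyz: "x \<in> V" "y \<in> V" "z \<in> V" "distinct [x, y, z]"
    and f: "oidrd V E ((\<lambda>_. 0)(x := 2, y := 2, z := 1))" and zx: "E z x" and y_adj: "E x y \<or> E z y"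
    and unseen: "\<forall>v\<in>V - {x, y, z}. z \<notin> nbr V E v"
  shows "pair_oidrd V E x y"
proof -
  have R: "nbr V E v = {x, y}" if "v \<in> V - {x, y, z}" for v
    using f that unseen unfolding oidrd_221_iff[OF xyz] by blast
  have "nbr V E z \<subseteq> {x, y}"
  proof
    fix u assume u: "u \<in> nbr V E z"
    show "u \<in> {x, y}"
    proof (rule ccontr)
      assume "u \<notin> {x, y}"
      then have "u \<in> V - {x, y, z}" using u nbr_subset by auto
      moreover have "z \<in> nbr V E u" using u nbr_sym by blast
      ultimately show False using unseen by blast
    qed
  qed
  have "x \<in> nbr V E v \<and> nbr V E v \<subseteq> {x, y}" if "v \<in> V - {x, y}" for v
    using that zx R \<open>nbr V E z \<subseteq> {x, y}\<close> mem_nbr_iff by (cases "v = z") auto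
  moreover have "x \<in> nbr V E y \<or> (\<forall>v\<in>V - {x, y}. y \<in> nbr V E v)"
  proof (cases "E x y")
    case True
    then show ?thesis using adj_sym mem_nbr_iff by blast
  next
    case False
    then have "E z y" using y_adj by blast
    then have "y \<in> nbr V E v" if "v \<in> V - {x, y}" for v
      using that R mem_nbr_iff by (cases "v = z") auto
    then show ?thesis by blast
  qed
  ultimately show ?thesis using xyz unfolding pair_oidrd_iff by auto
qed

lemma oidrd_221_cover:
  assumes xyz: "x \<in> V" "y \<in> V" "z \<in> V" "distinct [x, y, z]"
    and f: "oidrd V E ((\<lambda>_. 0)(x := 2, y := 2, z := 1))"
  shows "V - {x, y, z} = nbr_class V E {x, y, z} {x, y} \<union> nbr_class V E {x, y, z} {x, y, z}"
proof -
  have "nbr V E v = {x, y} \<or> nbr V E v = {x, y, z}" if "v \<in> V - {x, y, z}" for v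
    using f that unfolding oidrd_221_iff[OF xyz] by (cases "z \<in> nbr V E v") auto
  then show ?thesis by (auto simp: nbr_class_def)
qed

lemma pair_or_famH4_of_221_without_T:
  assumes con: "connected_graph V E" and xyz: "x \<in> V" "y \<in> V" "z \<in> V" "distinct [x, y, z]"
    and f: "oidrd V E ((\<lambda>_. 0)(x := 2, y := 2, z := 1))" and zx: "E z x"
    and T: "nbr_class V E {x, y, z} {x, y, z} = {}"
  shows "pair_oidrd V E x y \<or> famH4 V E"
proof -
  define S where "S = nbr_class V E {x, y, z} {x, y}"
  have R: "V - {x, y, z} = S" using oidrd_221_cover[OF xyz f] T by (simp add: S_def)
  have unseen: "\<forall>v\<in>V - {x, y, z}. z \<notin> nbr V E v" using R xyz by (auto simp: S_def nbr_class_def)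
  show ?thesis
  proof (cases "E x y \<or> E z y")
    case True
    then show ?thesis using pair_oidrd_of_221_if_unseen[OF xyz f zx _ unseen] by blast
  next
    case False
    obtain u where u: "u \<in> nbr V E y" using has_nbr_if_connected[OF con xyz(2,1)] xyz by auto
    have "u \<in> V - {y}" "u \<noteq> x" "u \<noteq> z"
      using u nbr_subset[of y] False adj_sym mem_nbr_iff by auto
    then have "u \<in> S" using R by blast
    then have S_ne: "S \<noteq> {}" by blast
    have att: "attached V E {y, x, z} S {y, x}" "attached V E {y, x, z} {} {y, x, z}"
      by (auto simp: attached_def S_def nbr_class_def)
    have V: "V = {y, x, z} \<union> S \<union> {}" using R xyz by auto
    have E: "E x z" "\<not> E y x" "\<not> E y z" using zx False adj_sym by blast+
    have "famH4 V E" unfolding famH4_def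
      by (rule exI[of _ y], rule exI[of _ x], rule exI[of _ z], rule exI[of _ S], rule exI[of _ "{}"])
        (use xyz E att V S_ne in auto)
    then show ?thesis ..
  qed
qed

lemma pair_or_famH2_of_221_single_T:
  assumes xyz: "x \<in> V" "y \<in> V" "z \<in> V" "distinct [x, y, z]"
    and f: "oidrd V E ((\<lambda>_. 0)(x := 2, y := 2, z := 1))" and zx: "E z x"
    and S: "nbr_class V E {x, y, z} {x, y} = {}" and T: "nbr_class V E {x, y, z} {x, y, z} = {w}"
  shows "(\<exists>u v. pair_oidrd V E u v) \<or> famH2 V E"
proof -
  have "V - {x, y, z} = {w}" using oidrd_221_cover[OF xyz f] S T by simp
  then have V: "V = {x, y, z, w}" "distinct [x, y, z, w]" using xyz by auto
  have "w \<in> nbr_class V E {x, y, z} {x, y, z}" using T by simp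
  then have w: "E w x" "E w y" "E w z" by (auto simp: nbr_class_def mem_nbr_iff[symmetric])
  show ?thesis
  proof (cases "E x y \<and> E z y")
    case True
    have att: "attached V E {x, y, z} {} {y}" "attached V E {x, y, z} {} {x, y}"
      "attached V E {x, y, z} {} {y, z}" "attached V E {x, y, z} {w} {x, y, z}"
      using T attached_nbr_class[of V E "{x, y, z}" "{x, y, z}"] by (auto simp: attached_def)
    have "famH2 V E" unfolding famH2_def
      by (rule exI[of _ x], rule exI[of _ y], rule exI[of _ z], rule exI[of _ "{}"], rule exI[of _ "{}"],
          rule exI[of _ "{}"], rule exI[of _ "{w}"])
        (use xyz True zx adj_sym att V in auto)
    then show ?thesis ..
  next
    case False
    then consider "E x y" "\<not> E z y" | "\<not> E x y" "E z y" | "\<not> E x y" "\<not> E z y" by blast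
    then show ?thesis
    proof cases
      case 1
      then have "pair_oidrd V E x w"
        using V zx w adj_sym by (intro pair_oidrd_of_four_vertices[of x w y z]) auto
      then show ?thesis by blast
    next
      case 2
      then have "pair_oidrd V E z w"
        using V zx w adj_sym by (intro pair_oidrd_of_four_vertices[of z w x y]) auto
      then show ?thesis by blast
    next
      case 3
      then have "pair_oidrd V E w x"
        using V w adj_sym by (intro pair_oidrd_of_four_vertices[of w x y z]) auto
      then show ?thesis by blast
    qed
  qed
qed

lemma famH2_or_famH5_of_221_nondegenerate:
  assumes xyz: "x \<in> V" "y \<in> V" "z \<in> V" "distinct [x, y, z]"
    and f: "oidrd V E ((\<lambda>_. 0)(x := 2, y := 2, z := 1))" and E: "E z x" "E x y"
  defines "S \<equiv> nbr_class V E {x, y, z} {x, y}" and "T \<equiv> nbr_class V E {x, y, z} {x, y, z}"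
  assumes T: "T \<noteq> {}" and big: "S \<noteq> {} \<or> 2 \<le> card T"
  shows "famH2 V E \<or> famH5 V E"
proof -
  have V: "V = {x, y, z} \<union> S \<union> T" using oidrd_221_cover[OF xyz f] xyz unfolding S_def T_def by blast
  have att: "attached V E {x, y, z} S {x, y}" "attached V E {x, y, z} T {x, y, z}"
    "attached V E {y, x, z} S {y, x}" "attached V E {y, x, z} T {y, x, z}"
    unfolding S_def T_def by (auto intro!: attached_nbr_class_eq)
  have att_empty: "attached V E {x, y, z} {} X" for X by (simp add: attached_def)
  show ?thesis
  proof (cases "E z y")
    case True
    have "famH2 V E" unfolding famH2_def
      by (rule exI[of _ x], rule exI[of _ y], rule exI[of _ z], rule exI[of _ "{}"], rule exI[of _ S],
          rule exI[of _ "{}"], rule exI[of _ T]) (use xyz E True V T att att_empty adj_sym in auto)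
    then show ?thesis ..
  next
    case False
    have "famH5 V E" unfolding famH5_def
      by (rule exI[of _ y], rule exI[of _ x], rule exI[of _ z], rule exI[of _ S], rule exI[of _ T])
        (use xyz E False V T big att adj_sym in auto)
    then show ?thesis ..
  qed
qed

lemma famH4_or_famH6_of_221_nondegenerate:
  assumes xyz: "x \<in> V" "y \<in> V" "z \<in> V" "distinct [x, y, z]"
    and f: "oidrd V E ((\<lambda>_. 0)(x := 2, y := 2, z := 1))" and E: "E z x" "\<not> E x y"
  defines "S \<equiv> nbr_class V E {x, y, z} {x, y}" and "T \<equiv> nbr_class V E {x, y, z} {x, y, z}"
  assumes T: "T \<noteq> {}" and big: "S \<noteq> {} \<or> 2 \<le> card T"
  shows "famH4 V E \<or> famH6 V E"
proof -
  have V: "V = {x, y, z} \<union> S \<union> T" using oidrd_221_cover[OF xyz f] xyz unfolding S_def T_def by blast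
  have att: "attached V E {y, x, z} S {y, x}" "attached V E {y, x, z} T {y, x, z}"
    "attached V E {x, z, y} S {x, y}" "attached V E {x, z, y} T {x, z, y}"
    unfolding S_def T_def by (auto intro!: attached_nbr_class_eq)
  show ?thesis
  proof (cases "E z y")
    case True
    have "famH6 V E" unfolding famH6_def
      by (rule exI[of _ x], rule exI[of _ z], rule exI[of _ y], rule exI[of _ S], rule exI[of _ T])
        (use xyz E True V T big att adj_sym in auto)
    then show ?thesis ..
  next
    case False
    have "famH4 V E" unfolding famH4_def
      by (rule exI[of _ y], rule exI[of _ x], rule exI[of _ z], rule exI[of _ S], rule exI[of _ T])
        (use xyz E False V T big att adj_sym in auto)
    then show ?thesis ..
  qed
qed

lemma oidrd_221_imp_pair_or_famH_of_adj:
  assumes con: "connected_graph V E" and xyz: "x \<in> V" "y \<in> V" "z \<in> V" "distinct [x, y, z]"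
    and f: "oidrd V E ((\<lambda>_. 0)(x := 2, y := 2, z := 1))" and zx: "E z x"
  shows "(\<exists>u v. pair_oidrd V E u v) \<or> famH2 V E \<or> famH4 V E \<or> famH5 V E \<or> famH6 V E"
proof -
  define S where "S = nbr_class V E {x, y, z} {x, y}"
  define T where "T = nbr_class V E {x, y, z} {x, y, z}"
  have "finite T" using finite_V by (simp add: T_def nbr_class_def)
  consider "T = {}" | w where "S = {}" "T = {w}" | "T \<noteq> {}" "S \<noteq> {} \<or> 2 \<le> card T"
    using two_le_card_if_not_singleton[OF \<open>finite T\<close>] by blast
  then show ?thesis
  proof cases
    case 1
    then show ?thesis using pair_or_famH4_of_221_without_T[OF con xyz f zx] by (auto simp: T_def)
  next
    case 2
    then show ?thesis using pair_or_famH2_of_221_single_T[OF xyz f zx] by (auto simp: S_def T_def)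
  next
    case 3
    then show ?thesis
      using famH2_or_famH5_of_221_nondegenerate[OF xyz f zx] famH4_or_famH6_of_221_nondegenerate[OF xyz f zx]
      by (auto simp: S_def T_def)
  qed
qed

lemma oidrd_221_imp_pair_or_famH:
  assumes con: "connected_graph V E" and xyz: "x \<in> V" "y \<in> V" "z \<in> V" "distinct [x, y, z]"
    and f: "oidrd V E ((\<lambda>_. 0)(x := 2, y := 2, z := 1))"
  shows "(\<exists>u v. pair_oidrd V E u v) \<or> famH2 V E \<or> famH4 V E \<or> famH5 V E \<or> famH6 V E"
proof (cases "E z x")
  case True
  then show ?thesis using oidrd_221_imp_pair_or_famH_of_adj[OF con xyz f] by blast
next
  case False
  then have "E z y" using f unfolding oidrd_221_iff[OF xyz] by (auto simp: mem_nbr_iff)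
  have "(\<lambda>_. 0::nat)(x := 2, y := 2, z := 1) = (\<lambda>_. 0)(y := 2, x := 2, z := 1)"
    by (auto simp: fun_eq_iff)
  then have "oidrd V E ((\<lambda>_. 0)(y := 2, x := 2, z := 1))" using f by simp
  moreover have "distinct [y, x, z]" using xyz by auto
  ultimately show ?thesis
    using oidrd_221_imp_pair_or_famH_of_adj[OF con xyz(2,1,3)] \<open>E z y\<close> by blast
qed

end

lemma triangle_subset_two_cover:
  assumes cover: "\<And>u v. E u v \<Longrightarrow> u \<in> {x, y} \<or> v \<in> {x, y}"
    and "E u v" "E v w" "E u w" "distinct [u, v, w]"
  shows "{x, y} \<subseteq> {u, v, w}"
  using cover[of u v] cover[of v w] cover[of u w] assms(2-) by auto

context sgraph
begin

lemma pair_oidrd_edge_cover: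
  assumes "pair_oidrd V E x y" "E u v"
  shows "u \<in> {x, y} \<or> v \<in> {x, y}"
  using assms adj_in_V[OF assms(2)] mem_nbr_iff unfolding pair_oidrd_iff by blast

lemma not_pair_oidrd_if_bowtie:
  assumes "E b a" "E b p" "E a p" "E b c" "E b q" "E c q" "distinct [b, a, p, c, q]"
  shows "\<not> pair_oidrd V E x y"
proof
  assume pair: "pair_oidrd V E x y"
  note cover = pair_oidrd_edge_cover[OF pair]
  have "{x, y} \<subseteq> {b, a, p}" "{x, y} \<subseteq> {b, c, q}"
    using triangle_subset_two_cover[OF cover, where u=b and v=a and w=p]
      triangle_subset_two_cover[OF cover, where u=b and v=c and w=q]
      assms by auto
  then show False using pair assms(7) by (auto simp: pair_oidrd_def)
qed

lemma not_pair_oidrd_if_diamond_and_edge: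
  assumes "E u v" "E u s" "E v s" "E u t" "E v t" "distinct [u, v, s, t]"
    and "E e1 e2" "e1 \<notin> {u, v}" "e2 \<notin> {u, v}"
  shows "\<not> pair_oidrd V E x y"
proof
  assume pair: "pair_oidrd V E x y"
  note cover = pair_oidrd_edge_cover[OF pair]
  have "{x, y} \<subseteq> {u, v, s}" "{x, y} \<subseteq> {u, v, t}"
    using triangle_subset_two_cover[OF cover, where u=u and v=v and w=s]
      triangle_subset_two_cover[OF cover, where u=u and v=v and w=t]
      assms by auto
  then have "{x, y} = {u, v}" using pair assms(6) by (auto simp: pair_oidrd_def)
  then show False using cover[OF assms(7)] assms(8,9) by blast
qed

lemma not_pair_oidrd_if_induced_P4:
  assumes "E u1 u2" "E u2 u3" "E u3 u4" "\<not> E u1 u3" "\<not> E u2 u4" "\<not> E u1 u4"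
    and "distinct [u1, u2, u3, u4]"
  shows "\<not> pair_oidrd V E x y"
proof
  assume pair: "pair_oidrd V E x y"
  have us: "u1 \<in> V" "u2 \<in> V" "u3 \<in> V" "u4 \<in> V" using assms(1-3) adj_in_V by blast+
  have to_x: "E v x" if "v \<in> V - {x, y}" for v
    using pair that mem_nbr_iff unfolding pair_oidrd_iff by blast
  have to_y: "E x y \<or> (\<forall>v\<in>V - {x, y}. E v y)"
    using pair adj_sym mem_nbr_iff unfolding pair_oidrd_iff by blast
  have "u1 \<in> {x, y} \<or> u2 \<in> {x, y}" "u2 \<in> {x, y} \<or> u3 \<in> {x, y}" "u3 \<in> {x, y} \<or> u4 \<in> {x, y}"
    using pair_oidrd_edge_cover[OF pair] assms(1-3) by blast+
  then show False using to_x to_y us assms adj_sym pair by (auto simp: pair_oidrd_def)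
qed

lemma famH1_not_pair_oidrd:
  assumes "famH1 V E"
  shows "\<not> pair_oidrd V E x y"
proof -
  obtain a b c Vb Vab Vbc Vabc where abc: "a \<in> V" "b \<in> V" "c \<in> V" "distinct [a, b, c]" "E a b" "E b c"
    "\<not> E a c" and att: "attached V E {a, b, c} Vb {b}" "attached V E {a, b, c} Vab {a, b}"
      "attached V E {a, b, c} Vbc {b, c}" "attached V E {a, b, c} Vabc {a, b, c}"
    and "V = {a, b, c} \<union> Vb \<union> Vab \<union> Vbc \<union> Vabc"
    and cond: "(Vab = {} \<and> Vbc = {} \<and> 2 \<le> card Vabc) \<or> ((Vab = {} \<longleftrightarrow> Vbc \<noteq> {}) \<and> Vabc \<noteq> {})
      \<or> (Vab \<noteq> {} \<and> Vbc \<noteq> {})"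
    using assms unfolding famH1_def by (elim exE conjE) (rule that; assumption)
  have left: "{a, b} \<subseteq> nbr V E p" "p \<notin> {a, b, c}" if "p \<in> Vab \<union> Vabc" for p
    using that attachedD[OF att(2), of p] attachedD[OF att(4), of p] by auto
  have right: "{b, c} \<subseteq> nbr V E q" "q \<notin> {a, b, c}" if "q \<in> Vbc \<union> Vabc" for q
    using that attachedD[OF att(3), of q] attachedD[OF att(4), of q] by auto
  obtain p q where pq: "p \<in> Vab \<union> Vabc" "q \<in> Vbc \<union> Vabc" "p \<noteq> q"
  proof -
    consider "Vab \<noteq> {}" "Vbc \<union> Vabc \<noteq> {}" | "Vbc \<noteq> {}" "Vabc \<noteq> {}" | "2 \<le> card Vabc"
      using cond by blast
    then show thesis
    proof cases
      case 1
      then obtain p q where "p \<in> Vab" "q \<in> Vbc \<union> Vabc" by blast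
      moreover have "p \<noteq> q" using calculation attachedD(3)[OF att(2)] right(1) abc(4) by fastforce
      ultimately show thesis using that by blast
    next
      case 2
      then obtain p q where "p \<in> Vabc" "q \<in> Vbc" by blast
      moreover have "p \<noteq> q" using calculation attachedD(3)[OF att(3)] left(1) abc(4) by fastforce
      ultimately show thesis using that by blast
    next
      case 3
      then show thesis using that by (metis UnI2 two_elements_if_two_le_card)
    qed
  qed
  show ?thesis
    using left[OF pq(1)] right[OF pq(2)] pq(3) abc adj_sym
    by (intro not_pair_oidrd_if_bowtie[of b a p c q]) (auto simp: mem_nbr_iff)
qed

lemma famH2_not_pair_oidrd:
  assumes "famH2 V E"
  shows "\<not> pair_oidrd V E x y"
proof -
  obtain a b c Vb Vab Vbc Vabc where abc: "distinct [a, b, c]" "E a b" "E b c" "E a c"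
    and att: "attached V E {a, b, c} Vab {a, b}" "attached V E {a, b, c} Vbc {b, c}"
      "attached V E {a, b, c} Vabc {a, b, c}"
    and cond: "Vabc \<noteq> {} \<or> (Vab \<noteq> {} \<and> Vbc \<noteq> {})"
    using assms unfolding famH2_def by (elim exE conjE) (rule that; assumption)
  show ?thesis
  proof (cases "Vabc = {}")
    case False
    then obtain w where w: "w \<in> Vabc" by blast
    have "E a w" "E b w" "E c w" "w \<notin> {a, b, c}"
      using attached_adj_iff[OF att(3) w] attachedD(2)[OF att(3) w] adj_sym by auto
    then show ?thesis
      using abc by (intro not_pair_oidrd_if_diamond_and_edge[of a b c w c w]) auto
  next
    case True
    then obtain p q where p: "p \<in> Vab" and q: "q \<in> Vbc" using cond by blast
    have "E a p" "E b p" "\<not> E p c" "p \<notin> {a, b, c}"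
      using attached_adj_iff[OF att(1) p] attachedD(2)[OF att(1) p] abc(1) adj_sym by auto
    moreover have "E b q" "E c q" "q \<notin> {a, b, c}"
      using attached_adj_iff[OF att(2) q] attachedD(2)[OF att(2) q] adj_sym by auto
    ultimately show ?thesis
      using abc adj_sym by (intro not_pair_oidrd_if_bowtie[of b a p c q]) auto
  qed
qed

lemma famH3_not_pair_oidrd:
  assumes "famH3 V E"
  shows "\<not> pair_oidrd V E x y"
proof -
  obtain a b Va Vab where ab: "a \<noteq> b" "\<not> E a b"
    and att: "attached V E {a, b} Va {a}" "attached V E {a, b} Vab {a, b}"
    and ne: "Va \<noteq> {}" "Vab \<noteq> {}"
    using assms unfolding famH3_def by (elim exE conjE) (rule that; assumption)
  obtain l w where l: "l \<in> Va" and w: "w \<in> Vab" using ne by blast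
  have w_adj: "E a w" "E w b" "w \<notin> {a, b}"
    using attached_adj_iff[OF att(2) w] attachedD(2)[OF att(2) w] adj_sym by auto
  have l_adj: "E l a" "\<not> E l w" "\<not> E l b" "l \<notin> {a, b}"
    using attached_adj_iff[OF att(1) l] attachedD(2)[OF att(1) l] w_adj(3) ab(1) by auto
  have "distinct [l, a, w, b]" using l_adj w_adj ab(1) by auto
  then show ?thesis
    using l_adj w_adj ab(2) by (intro not_pair_oidrd_if_induced_P4[of l a w b])
qed

lemma famH4_not_pair_oidrd:
  assumes "famH4 V E"
  shows "\<not> pair_oidrd V E x y"
proof -
  obtain a b c Vab Vabc where abc: "distinct [a, b, c]" "E b c" "\<not> E a b" "\<not> E a c"
    and att: "attached V E {a, b, c} Vab {a, b}" "attached V E {a, b, c} Vabc {a, b, c}"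
    and cond: "(Vab = {} \<and> 2 \<le> card Vabc) \<or> Vab \<noteq> {}"
    using assms unfolding famH4_def by (elim exE conjE) (rule that; assumption)
  show ?thesis
  proof (cases "Vab = {}")
    case True
    then obtain w1 w2 where w: "w1 \<in> Vabc" "w2 \<in> Vabc" "w1 \<noteq> w2"
      using cond two_elements_if_two_le_card by metis
    have "E b w1" "E c w1" "E b w2" "E c w2" "E a w1" "w1 \<notin> {a, b, c}" "w2 \<notin> {a, b, c}"
      using attached_adj_iff[OF att(2)] attachedD(2)[OF att(2)] w adj_sym by auto
    then show ?thesis
      using abc w(3) by (intro not_pair_oidrd_if_diamond_and_edge[of b c w1 w2 a w1]) auto
  next
    case False
    then obtain p where p: "p \<in> Vab" by blast
    have "E a p" "E p b" "\<not> E p c" "p \<notin> {a, b, c}"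
      using attached_adj_iff[OF att(1) p] attachedD(2)[OF att(1) p] abc(1) adj_sym by auto
    then show ?thesis
      using abc adj_sym by (intro not_pair_oidrd_if_induced_P4[of a p b c]) auto
  qed
qed

lemma famH5_not_pair_oidrd:
  assumes "famH5 V E"
  shows "\<not> pair_oidrd V E x y"
proof -
  obtain a b c Vab Vabc where abc: "distinct [a, b, c]" "E a b" "E b c"
    and att: "attached V E {a, b, c} Vab {a, b}" "attached V E {a, b, c} Vabc {a, b, c}"
    and cond: "(Vab \<noteq> {} \<and> Vabc \<noteq> {}) \<or> (Vab = {} \<and> 2 \<le> card Vabc)"
    using assms unfolding famH5_def by (elim exE conjE) (rule that; assumption)
  have left: "E a p \<and> E b p \<and> p \<notin> {a, b, c}" if "p \<in> Vab \<union> Vabc" for p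
    using that attached_adj_iff[OF att(1)] attached_adj_iff[OF att(2)] attachedD(2)[OF att(1)]
      attachedD(2)[OF att(2)] adj_sym by blast
  have right: "E b q \<and> E c q \<and> q \<notin> {a, b, c}" if "q \<in> Vabc" for q
    using that attached_adj_iff[OF att(2)] attachedD(2)[OF att(2)] adj_sym by blast
  obtain p q where "p \<in> Vab \<union> Vabc" "q \<in> Vabc" "p \<noteq> q"
  proof (cases "Vab = {}")
    case True
    then show thesis using that cond two_elements_if_two_le_card[of Vabc] by (metis UnI2)
  next
    case False
    then obtain p q where "p \<in> Vab" "q \<in> Vabc" using cond by blast
    moreover have "p \<noteq> q"
      using calculation attached_adj_iff[OF att(1)] attached_adj_iff[OF att(2)] abc(1) by force
    ultimately show thesis using that by blast
  qed
  then show ?thesis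
    using left right abc adj_sym by (intro not_pair_oidrd_if_bowtie[of b a p c q]) auto
qed

lemma famH6_not_pair_oidrd:
  assumes "famH6 V E"
  shows "\<not> pair_oidrd V E x y"
proof -
  obtain a b c Vac Vabc where abc: "distinct [a, b, c]" "E a b" "E b c"
    and att: "attached V E {a, b, c} Vac {a, c}" "attached V E {a, b, c} Vabc {a, b, c}"
    and cond: "(Vac \<noteq> {} \<and> Vabc \<noteq> {}) \<or> (Vac = {} \<and> 2 \<le> card Vabc)"
    using assms unfolding famH6_def by (elim exE conjE) (rule that; assumption)
  have w_adj: "E a w" "E b w" "E c w" "w \<notin> {a, b, c}" if "w \<in> Vabc" for w
    using attached_adj_iff[OF att(2) that] attachedD(2)[OF att(2) that] adj_sym by auto
  show ?thesis
  proof (cases "Vac = {}")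
    case True
    then obtain w1 w2 where w: "w1 \<in> Vabc" "w2 \<in> Vabc" "w1 \<noteq> w2"
      using cond two_elements_if_two_le_card by metis
    then show ?thesis
      using w_adj[OF w(1)] w_adj[OF w(2)] abc adj_sym by (intro not_pair_oidrd_if_bowtie[of b a w1 c w2]) auto
  next
    case False
    then obtain p w where p: "p \<in> Vac" and w: "w \<in> Vabc" using cond by blast
    have "E p a" "\<not> E p b" "p \<notin> {a, b, c}"
      using attached_adj_iff[OF att(1) p] attachedD(2)[OF att(1) p] abc(1) by auto
    then show ?thesis
      using w_adj[OF w] abc adj_sym
      by (intro not_pair_oidrd_if_diamond_and_edge[of b w a c p a]) auto
  qed
qed

lemma famH12_imp_oidrd_311:
  assumes "famH1 V E \<or> famH2 V E"
  obtains x y z where "x \<in> V" "y \<in> V" "z \<in> V" "distinct [x, y, z]"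
    "oidrd V E ((\<lambda>_. 0)(x := 3, y := 1, z := 1))"
proof -
  obtain a b c Vb Vab Vbc Vabc where abc: "a \<in> V" "b \<in> V" "c \<in> V" "distinct [a, b, c]" "E a b" "E b c"
    and att: "attached V E {a, b, c} Vb {b}" "attached V E {a, b, c} Vab {a, b}"
      "attached V E {a, b, c} Vbc {b, c}" "attached V E {a, b, c} Vabc {a, b, c}"
    and V: "V = {a, b, c} \<union> Vb \<union> Vab \<union> Vbc \<union> Vabc"
    using assms unfolding famH1_def famH2_def by (elim disjE exE conjE) (rule that; assumption)+
  have "b \<in> nbr V E v \<and> nbr V E v \<subseteq> {b, a, c}" if "v \<in> V - {b, a, c}" for v
  proof -
    have "v \<in> Vb \<or> v \<in> Vab \<or> v \<in> Vbc \<or> v \<in> Vabc" using that V by blast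
    then show ?thesis using attachedD(3)[OF att(1)] attachedD(3)[OF att(2)] attachedD(3)[OF att(3)]
      attachedD(3)[OF att(4)] by auto
  qed
  moreover have "b \<in> nbr V E a" "b \<in> nbr V E c" using abc adj_sym mem_nbr_iff by auto
  moreover have "distinct [b, a, c]" using abc by auto
  ultimately have "oidrd V E ((\<lambda>_. 0)(b := 3, a := 1, c := 1))"
    using abc by (subst oidrd_311_iff) auto
  then show thesis using that abc \<open>distinct [b, a, c]\<close> by blast
qed

lemma famH3_imp_oidrd_32:
  assumes "famH3 V E"
  obtains x y where "x \<in> V" "y \<in> V" "x \<noteq> y" "oidrd V E ((\<lambda>_. 0)(x := 3, y := 2))"
proof -
  obtain a b Va Vab where ab: "a \<in> V" "b \<in> V" "a \<noteq> b"
    and att: "attached V E {a, b} Va {a}" "attached V E {a, b} Vab {a, b}"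
    and V: "V = {a, b} \<union> Va \<union> Vab"
    using assms unfolding famH3_def by (elim exE conjE) (rule that; assumption)
  have "a \<in> nbr V E v \<and> nbr V E v \<subseteq> {a, b}" if "v \<in> V - {a, b}" for v
  proof -
    have "v \<in> Va \<or> v \<in> Vab" using that V by blast
    then show ?thesis using attachedD(3)[OF att(1)] attachedD(3)[OF att(2)] by auto
  qed
  then have "oidrd V E ((\<lambda>_. 0)(a := 3, b := 2))" using ab by (subst oidrd_32_iff) auto
  then show thesis using that ab by blast
qed

lemma famH456_shape:
  assumes "famH4 V E \<or> famH5 V E \<or> famH6 V E"
  obtains x y z S T where "x \<in> V" "y \<in> V" "z \<in> V" "distinct [x, y, z]" "E z y"
    "attached V E {x, y, z} S {x, y}" "attached V E {x, y, z} T {x, y, z}" "V = {x, y, z} \<union> S \<union> T"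
proof -
  consider "famH4 V E \<or> famH5 V E" | "famH6 V E" using assms by blast
  then show thesis
  proof cases
    case 1
    then obtain a b c Vab Vabc where "a \<in> V" "b \<in> V" "c \<in> V" "distinct [a, b, c]" "E b c"
      "attached V E {a, b, c} Vab {a, b}" "attached V E {a, b, c} Vabc {a, b, c}"
      "V = {a, b, c} \<union> Vab \<union> Vabc"
      unfolding famH4_def famH5_def by (elim disjE exE conjE) (rule that; assumption)+
    then show thesis using that[of a b c Vab Vabc] adj_sym by blast
  next
    case 2
    then obtain a b c Vac Vabc where "a \<in> V" "b \<in> V" "c \<in> V" "distinct [a, b, c]" "E b c"
      "attached V E {a, b, c} Vac {a, c}" "attached V E {a, b, c} Vabc {a, b, c}"
      "V = {a, b, c} \<union> Vac \<union> Vabc"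
      unfolding famH6_def by (elim exE conjE) (rule that; assumption)
    moreover have "{a, b, c} = {a, c, b}" by blast
    ultimately show thesis using that[of a c b Vac Vabc] by auto
  qed
qed

lemma famH456_imp_oidrd_221:
  assumes "famH4 V E \<or> famH5 V E \<or> famH6 V E"
  obtains x y z where "x \<in> V" "y \<in> V" "z \<in> V" "distinct [x, y, z]"
    "oidrd V E ((\<lambda>_. 0)(x := 2, y := 2, z := 1))"
proof -
  obtain x y z S T where xyz: "x \<in> V" "y \<in> V" "z \<in> V" "distinct [x, y, z]" "E z y"
    and att: "attached V E {x, y, z} S {x, y}" "attached V E {x, y, z} T {x, y, z}"
    and V: "V = {x, y, z} \<union> S \<union> T"
    using famH456_shape[OF assms] .
  have "{x, y} \<subseteq> nbr V E v \<and> nbr V E v \<subseteq> {x, y, z}" if "v \<in> V - {x, y, z}" for v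
  proof -
    have "v \<in> S \<or> v \<in> T" using that V by blast
    then show ?thesis using attachedD(3)[OF att(1)] attachedD(3)[OF att(2)] by auto
  qed
  moreover have "y \<in> nbr V E z" using xyz mem_nbr_iff by auto
  ultimately have "oidrd V E ((\<lambda>_. 0)(x := 2, y := 2, z := 1))"
    using xyz by (subst oidrd_221_iff) auto
  then show thesis using that xyz by blast
qed

end

definition famH :: "'a set \<Rightarrow> ('a \<Rightarrow> 'a \<Rightarrow> bool) \<Rightarrow> bool" where
  "famH V E \<longleftrightarrow> famH1 V E \<or> famH2 V E \<or> famH3 V E \<or> famH4 V E \<or> famH5 V E \<or> famH6 V E"

context sgraph
begin

lemma famH_not_pair_oidrd:
  assumes "famH V E"
  shows "\<not> pair_oidrd V E x y"
  using assms famH1_not_pair_oidrd famH2_not_pair_oidrd famH3_not_pair_oidrd famH4_not_pair_oidrd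
    famH5_not_pair_oidrd famH6_not_pair_oidrd unfolding famH_def by blast

lemma pair_oidrd_or_famH_if_gamma_oidR_le_5:
  assumes con: "connected_graph V E" and n: "3 \<le> card V" and le: "gamma_oidR V E \<le> 5"
  shows "(\<exists>x y. pair_oidrd V E x y) \<or> famH V E"
proof -
  obtain f where f: "oidrd V E f" "sum f V = gamma_oidR V E"
    using gamma_oidR_attained[OF finite_V] by blast
  have "sum f V \<le> 5" using f(2) le by simp
  with n f(1) show ?thesis
  proof (cases rule: light_oidrd_cases)
    case star
    then show ?thesis using pair_oidrd_if_star n by simp
  next
    case (p32 x y)
    then show ?thesis using oidrd_32_imp_pair_or_famH3[OF con] unfolding famH_def by blast
  next
    case (p311 x y z)
    then show ?thesis using oidrd_311_imp_pair_or_famH12 unfolding famH_def by blast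
  next
    case (p221 x y z)
    then show ?thesis using oidrd_221_imp_pair_or_famH[OF con] unfolding famH_def by blast
  qed blast
qed

lemma gamma_oidR_le_5_if_famH:
  assumes "famH V E"
  shows "gamma_oidR V E \<le> 5"
proof -
  consider "famH1 V E \<or> famH2 V E" | "famH3 V E" | "famH4 V E \<or> famH5 V E \<or> famH6 V E"
    using assms unfolding famH_def by blast
  then show ?thesis
  proof cases
    case 1
    then obtain x y z where xyz: "x \<in> V" "y \<in> V" "z \<in> V" "distinct [x, y, z]"
      and g: "oidrd V E ((\<lambda>_. 0)(x := 3, y := 1, z := 1))" by (rule famH12_imp_oidrd_311)
    have "gamma_oidR V E \<le> sum ((\<lambda>_. 0)(x := 3, y := 1, z := 1)) {x, y, z}"
      by (rule gamma_oidR_le_sum_on[OF g]) (use xyz in auto)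
    then show ?thesis using xyz by simp
  next
    case 2
    then obtain x y where xy: "x \<in> V" "y \<in> V" "x \<noteq> y"
      and g: "oidrd V E ((\<lambda>_. 0)(x := 3, y := 2))" by (rule famH3_imp_oidrd_32)
    have "gamma_oidR V E \<le> sum ((\<lambda>_. 0)(x := 3, y := 2)) {x, y}"
      by (rule gamma_oidR_le_sum_on[OF g]) (use xy in auto)
    then show ?thesis using xy by simp
  next
    case 3
    then obtain x y z where xyz: "x \<in> V" "y \<in> V" "z \<in> V" "distinct [x, y, z]"
      and g: "oidrd V E ((\<lambda>_. 0)(x := 2, y := 2, z := 1))" by (rule famH456_imp_oidrd_221)
    have "gamma_oidR V E \<le> sum ((\<lambda>_. 0)(x := 2, y := 2, z := 1)) {x, y, z}"
      by (rule gamma_oidR_le_sum_on[OF g]) (use xyz in auto)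
    then show ?thesis using xyz by simp
  qed
qed

lemma gamma_oidR_le_5_iff:
  assumes con: "connected_graph V E" and n: "3 \<le> card V"
  shows "gamma_oidR V E \<le> 5 \<longleftrightarrow> is_star V E \<or> famG V E \<or> famH V E"
proof
  assume "gamma_oidR V E \<le> 5"
  then show "is_star V E \<or> famG V E \<or> famH V E"
    using pair_oidrd_or_famH_if_gamma_oidR_le_5[OF con n] pair_oidrd_iff_star_or_famG[OF n] by blast
next
  assume "is_star V E \<or> famG V E \<or> famH V E"
  then consider "\<exists>x y. pair_oidrd V E x y" | "famH V E" using pair_oidrd_iff_star_or_famG[OF n] by blast
  then show "gamma_oidR V E \<le> 5"
  proof cases
    case 1
    then have "gamma_oidR V E \<le> 4" using gamma_oidR_le_4_iff[OF n] by blast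
    then show ?thesis by simp
  qed (rule gamma_oidR_le_5_if_famH)
qed

end

theorem proposition1:
  fixes V :: "'a set" and E :: "'a \<Rightarrow> 'a \<Rightarrow> bool"
  assumes "simple_graph V E" and "connected_graph V E" and "card V \<ge> 3"
  shows "(gamma_oidR V E = 3 \<longleftrightarrow> is_star V E)
       \<and> (gamma_oidR V E = 4 \<longleftrightarrow> famG V E)
       \<and> (gamma_oidR V E = 5 \<longleftrightarrow> famH1 V E \<or> famH2 V E \<or> famH3 V E \<or> famH4 V E \<or> famH5 V E \<or> famH6 V E)"
proof -
  interpret sgraph V E by (rule sgraph.intro) (rule assms(1))
  note n = assms(3)
  have le3: "gamma_oidR V E \<le> 3 \<longleftrightarrow> is_star V E" by (rule gamma_oidR_le_3_iff[OF n])
  have le4: "gamma_oidR V E \<le> 4 \<longleftrightarrow> is_star V E \<or> famG V E"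
    using gamma_oidR_le_4_iff[OF n] pair_oidrd_iff_star_or_famG[OF n] by simp
  have le5: "gamma_oidR V E \<le> 5 \<longleftrightarrow> is_star V E \<or> famG V E \<or> famH V E"
    by (rule gamma_oidR_le_5_iff[OF assms(2) n])
  have G: "famG V E \<Longrightarrow> \<not> is_star V E" by (rule famG_not_star)
  have H: "famH V E \<Longrightarrow> \<not> (is_star V E \<or> famG V E)"
    using famH_not_pair_oidrd pair_oidrd_iff_star_or_famG[OF n] by blast
  have eq3: "gamma_oidR V E = 3 \<longleftrightarrow> gamma_oidR V E \<le> 3"
    and eq4: "gamma_oidR V E = 4 \<longleftrightarrow> gamma_oidR V E \<le> 4 \<and> \<not> gamma_oidR V E \<le> 3"
    and eq5: "gamma_oidR V E = 5 \<longleftrightarrow> gamma_oidR V E \<le> 5 \<and> \<not> gamma_oidR V E \<le> 4"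
    using gamma_oidR_ge_3[OF n] by auto
  show ?thesis unfolding famH_def[symmetric]
  proof (intro conjI)
    show "gamma_oidR V E = 3 \<longleftrightarrow> is_star V E" using eq3 le3 by simp
    show "gamma_oidR V E = 4 \<longleftrightarrow> famG V E" using eq4 le3 le4 G by auto
    show "gamma_oidR V E = 5 \<longleftrightarrow> famH V E" using eq5 le4 le5 H by auto
  qed
qed

end
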